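(* For every positive integer $n$: $$3\,\frac{n(n+1)}{2}\ \Big|\ \sum_{k=1}^n kD_kD_{k-1},\qquad \frac{n^2(n+1)^2}{4}\ \Big|\ \sum_{k=1}^n k^3D_kD_{k-1},$$ $$\frac{n(n+1)(n+2)}{(2,n)}\ \Big|\ \sum_{k=1}^n k(k+1)(2k+1)s_k^2,$$ and $$\frac{1}{n(n+1)(n+2)}\sum_{k=1}^n k(k+1)(2k+1)(-1)^{n-k}s_k^2=\frac{s_ns_{n+1}}{3}\in\mathbb{Z},$$ where $(2,n)$ is the greatest common divisor of $2$ and $n$.
   Context: $D_n=\sum_{k=0}^n\binom{n}{k}\binom{n+k}{k}$ is the central Delannoy number. For $m\ge k\ge1$, the Narayana number is $N(m,k)=\frac1m\binom{m}{k}\binom{m}{k-1}$, and for $m\ge1$ the little Schröder number is $s_m=\sum_{k=1}^m N(m,k)2^{m-k}$. *)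

theory Defs
  imports Complex_Main
begin

definition delannoy :: "nat \<Rightarrow> nat" where
  "delannoy n = (\<Sum>k=0..n. (n choose k) * ((n + k) choose k))"

definition narayana :: "nat \<Rightarrow> nat \<Rightarrow> rat" where
  "narayana m k = (1 / of_nat m) * of_nat (m choose k) * of_nat (m choose (k - 1))"

definition schroeder_s :: "nat \<Rightarrow> rat" where
  "schroeder_s m = (\<Sum>k=1..m. narayana m k * 2 ^ (m - k))"

end

(* The products of Delannoy and little Schroeder numbers have expansions with weights 2^j,

     D_k D_(k-1) = 3 * sum_j C(k-1,j) C(k+j,j) C(2j,j) 2^j,
     s_k^2       =     sum_j C(k-1,j) C(k+j+1,j) c_(j+1)/(j+1) 2^j,
     s_k s_(k+1) = 3 * sum_j C(k-1,j) C(k+j+2,j) c_(j+1)/(j+1) 2^j     (c = Catalan),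

   obtained by checking that the right-hand sides obey the coupled recurrences which the
   three-term recurrences of D and s impose on squares and consecutive products.
   Summing over k and exchanging the summations, the coefficients weighted by k, k^3 and
   k(k+1)(2k+1) telescope to closed forms from which n(n+1)/2, n^2(n+1)^2/4, resp. both
   (n+1)(n+2) and n(n+1), split off with integral cofactors built from Catalan numbers.
   The alternating sum telescopes directly by the Schroeder recurrence. *)

theory Submission
  imports Defs
begin

text \<open>The termwise identities below are proved uniformly: with \<open>x = of_nat n\<close>, every binomial
  coefficient occurring is written as a common Pochhammer core times explicit linear factors in
  \<open>x\<close>, divided by a factorial, which turns the identity into one between rational functions.\<close>

lemma of_nat_choose_pochhammer:
  fixes A :: "'a::field_char_0"
  assumes "A = of_nat a - of_nat k + 1"
  shows "of_nat (a choose k) = pochhammer A k / fact k"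
  using assms by (simp add: binomial_gbinomial gbinomial_pochhammer')

lemma pochhammer_Suc_left: "b = a + 1 \<Longrightarrow> pochhammer a (Suc k) = a * pochhammer b k"
  by (simp add: pochhammer_rec)

lemma pochhammer_Suc_right: "c = a + of_nat k \<Longrightarrow> pochhammer a (Suc k) = pochhammer a k * c"
  by (simp add: pochhammer_Suc)

lemma central_binomial_Suc:
  "(of_nat (2 * (j + 1) choose (j + 1)) :: 'a::field_char_0)
     = 2 * (2 * of_nat j + 1) / (of_nat j + 1) * of_nat (2 * j choose j)"
proof -
  have "(2 * Suc j choose Suc j) * Suc j * Suc j = Suc (Suc (2 * j)) * (Suc (2 * j) choose j) * Suc j"
    using Suc_times_binomial_eq[of "Suc (2 * j)" j] by (simp del: binomial_Suc_Suc)
  also have "\<dots> = Suc (Suc (2 * j)) * ((Suc (2 * j) choose Suc j) * Suc j)"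
    using binomial_symmetric[of j "Suc (2 * j)"] by (simp del: binomial_Suc_Suc)
  also have "\<dots> = Suc j * (2 * Suc (2 * j) * (2 * j choose j))"
    by (simp only: Suc_times_binomial_eq[symmetric]) (simp del: binomial_Suc_Suc)
  finally have "(2 * Suc j choose Suc j) * Suc j * Suc j = 2 * Suc (2 * j) * (2 * j choose j) * Suc j"
    by (simp only: mult_ac)
  then have "(2 * Suc j choose Suc j) * Suc j = 2 * Suc (2 * j) * (2 * j choose j)"
    using mult_right_cancel[of "Suc j"] by (metis Zero_not_Suc)
  then have "(of_nat (2 * Suc j choose Suc j) :: 'a) * (of_nat j + 1)
      = 2 * (2 * of_nat j + 1) * of_nat (2 * j choose j)"
    by (metis of_nat_Suc of_nat_mult of_nat_numeral add.commute)
  moreover have "(of_nat j + 1 :: 'a) \<noteq> 0"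
    by (metis of_nat_Suc of_nat_eq_0_iff add.commute Zero_not_Suc)
  ultimately show ?thesis
    by (simp add: field_simps del: binomial_Suc_Suc)
qed

lemma of_nat_choose_two: "(of_nat (m choose 2) :: 'a::field_char_0) = of_nat m * (of_nat m - 1) / 2"
  by (subst of_nat_choose_pochhammer[of "of_nat m - 1"]) (simp_all add: pochhammer_Suc numeral_2_eq_2)

lemma square_and_product_by_recurrence:
  fixes u F P a b c :: "nat \<Rightarrow> 'a::field"
  assumes rec: "\<And>n. n \<ge> m \<Longrightarrow> a n * u (n + 1) = b n * u n - c n * u (n - 1)"
    and P_rec: "\<And>n. n \<ge> m \<Longrightarrow> a n * P n = b n * F n - c n * P (n - 1)"
    and F_rec: "\<And>n. n \<ge> m \<Longrightarrow>
      a n ^ 2 * F (n + 1) = a n * b n * P n - b n * c n * P (n - 1) + c n ^ 2 * F (n - 1)"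
    and a_nonzero: "\<And>n. n \<ge> m \<Longrightarrow> a n \<noteq> 0"
    and init: "F (m - 1) = u (m - 1) ^ 2" "P (m - 1) = u (m - 1) * u m" "F m = u m ^ 2"
    and "m \<ge> 1" "n \<ge> m - 1"
  shows "F n = u n ^ 2 \<and> P n = u n * u (n + 1)"
proof -
  have "F n = u n ^ 2 \<and> P n = u n * u (n + 1) \<and> F (n + 1) = u (n + 1) ^ 2"
    using \<open>n \<ge> m - 1\<close>
  proof (induction n rule: nat_induct_at_least)
    case base
    then show ?case using init \<open>m \<ge> 1\<close> by simp
  next
    case (Suc n)
    define k where "k = Suc n"
    have k: "k \<ge> m" "k - 1 = n" using Suc.hyps \<open>m \<ge> 1\<close> by (auto simp: k_def)
    have IH: "F n = u n ^ 2" "P n = u n * u k" "F k = u k ^ 2"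
      using Suc.IH by (simp_all add: k_def)
    have step: "a k * u (k + 1) = b k * u k - c k * u n"
      using rec[OF k(1)] k(2) by simp
    have "a k * P k = b k * u k ^ 2 - c k * (u n * u k)"
      using P_rec[OF k(1)] unfolding k(2) IH .
    also have "\<dots> = u k * (a k * u (k + 1))"
      unfolding step by (simp add: algebra_simps power2_eq_square)
    also have "\<dots> = a k * (u k * u (k + 1))"
      by (simp only: mult_ac)
    finally have "a k * P k = a k * (u k * u (k + 1))" .
    then have Pk: "P k = u k * u (k + 1)"
      using a_nonzero[OF k(1)] by simp
    have "a k ^ 2 * F (k + 1) = b k * u k * (a k * u (k + 1)) - b k * c k * (u n * u k) + c k ^ 2 * u n ^ 2"
      using F_rec[OF k(1)] unfolding k(2) IH Pk by (simp add: algebra_simps)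
    also have "\<dots> = (a k * u (k + 1)) ^ 2"
      unfolding step by (simp add: algebra_simps power2_eq_square)
    finally have "a k ^ 2 * F (k + 1) = (a k * u (k + 1)) ^ 2" .
    then have "F (k + 1) = u (k + 1) ^ 2"
      using a_nonzero[OF k(1)] by (simp add: power_mult_distrib)
    then show ?case using Pk IH by (simp add: k_def)
  qed
  then show ?thesis by simp
qed

lemma sum_lessThan_vanishing_tail:
  fixes h :: "nat \<Rightarrow> 'a::comm_monoid_add"
  assumes "\<And>k. k \<ge> B \<Longrightarrow> h k = 0" "B \<le> M"
  shows "(\<Sum>k<M. h k) = (\<Sum>k<B. h k)"
  using assms by (intro sum.mono_neutral_right) auto

definition pow2_sum :: "(nat \<Rightarrow> rat) \<Rightarrow> nat \<Rightarrow> rat" where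
  "pow2_sum u M = (\<Sum>j<M. u j * 2 ^ j)"

lemma pow2_sum_Suc_shift: "(\<Sum>j<M. u (Suc j) * 2 ^ Suc j) = pow2_sum u (Suc M) - u 0"
  unfolding pow2_sum_def sum.lessThan_Suc_shift by simp

lemma pow2_sum_pred_shift:
  "u 0 = 0 \<Longrightarrow> (\<Sum>k<Suc M. u (k - 1) * 2 ^ k) = 2 * pow2_sum u M"
  unfolding pow2_sum_def by (subst sum.lessThan_Suc_shift) (simp add: sum_distrib_left mult_ac)

lemma pow2_sum_pred2_shift:
  "u 0 = 0 \<Longrightarrow> (\<Sum>k<Suc (Suc M). u (k - 2) * 2 ^ k) = 4 * pow2_sum u M"
  unfolding pow2_sum_def
  by (simp only: sum.lessThan_Suc_shift) (simp add: sum_distrib_left mult_ac)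

lemma pow2_sum_cmult: "pow2_sum (\<lambda>j. c * u j) M = c * pow2_sum u M"
  unfolding pow2_sum_def sum_distrib_left by (simp add: mult.assoc)

lemma pow2_sum_in_Ints: "(\<And>j. u j * 2 ^ j \<in> \<int>) \<Longrightarrow> pow2_sum u M \<in> \<int>"
  unfolding pow2_sum_def by (intro Ints_sum) auto

lemma pow2_sum_vanishing_tail:
  "(\<And>j. j \<ge> B \<Longrightarrow> u j = 0) \<Longrightarrow> B \<le> M \<Longrightarrow> pow2_sum u M = pow2_sum u B"
  unfolding pow2_sum_def by (rule sum_lessThan_vanishing_tail) auto

section \<open>Delannoy numbers\<close>

definition delannoy_term :: "nat \<Rightarrow> nat \<Rightarrow> rat" where
  "delannoy_term n k = of_nat (n choose k) * of_nat (n + k choose k)"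

lemma delannoy_term_0 [simp]: "delannoy_term n 0 = 1"
  by (simp add: delannoy_term_def)

lemma delannoy_term_rec:
  assumes "n \<ge> 1"
  shows "(of_nat n + 1) * delannoy_term (n + 1) (k + 1)
    = (2 * of_nat n + 1) * (2 * delannoy_term n k + delannoy_term n (k + 1))
      - of_nat n * delannoy_term (n - 1) (k + 1)"
proof (cases k)
  case 0
  then show ?thesis
    using assms by (simp add: delannoy_term_def of_nat_diff algebra_simps)
next
  case (Suc i)
  define x :: rat where "x = of_nat n"
  have x_minus_1: "of_nat (n - 1) = x - 1" "of_nat (n - Suc 0) = x - 1"
    using assms by (simp_all add: x_def of_nat_diff)
  have n_minus_1: "n - 1 + (k + 1) = n + k"
    using assms by simp
  define Q where "Q = pochhammer (x - of_nat i) i"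
  define R where "R = pochhammer (x + 2) i"
  have binomials:
    "of_nat (n choose k) = Q * x / fact k"
    "of_nat (n choose (k + 1)) = (x - of_nat i - 1) * Q * x / fact (k + 1)"
    "of_nat (n + 1 choose (k + 1)) = Q * x * (x + 1) / fact (k + 1)"
    "of_nat (n - 1 choose (k + 1)) = (x - of_nat i - 2) * (x - of_nat i - 1) * Q / fact (k + 1)"
    "of_nat (n + k choose k) = (x + 1) * R / fact k"
    "of_nat (n + (k + 1) choose (k + 1)) = (x + 1) * R * (x + 2 + of_nat i) / fact (k + 1)"
    "of_nat (n + k choose (k + 1)) = x * (x + 1) * R / fact (k + 1)"
    "of_nat (n + 1 + (k + 1) choose (k + 1))
       = R * (x + 2 + of_nat i) * (x + 3 + of_nat i) / fact (k + 1)"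
    unfolding Suc Q_def R_def
    subgoal by (subst of_nat_choose_pochhammer[of "x - of_nat i"]) (auto simp: x_def pochhammer_Suc_right[of x])
    subgoal by (subst of_nat_choose_pochhammer[of "x - of_nat i - 1"])
        (auto simp: x_def pochhammer_Suc_right[of x] pochhammer_Suc_left[of "x - of_nat i"])
    subgoal by (subst of_nat_choose_pochhammer[of "x - of_nat i"])
        (auto simp: x_def pochhammer_Suc_right[of x] pochhammer_Suc_right[of "x + 1"])
    subgoal by (subst of_nat_choose_pochhammer[of "x - of_nat i - 2"])
        (auto simp: x_minus_1 pochhammer_Suc_left[of "x - of_nat i - 1"] pochhammer_Suc_left[of "x - of_nat i"])
    subgoal by (subst of_nat_choose_pochhammer[of "x + 1"]) (auto simp: x_def pochhammer_Suc_left[of "x + 2"])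
    subgoal by (subst of_nat_choose_pochhammer[of "x + 1"])
        (auto simp: x_def pochhammer_Suc_left[of "x + 2"] pochhammer_Suc_right[of "x + 2 + of_nat i"])
    subgoal by (subst of_nat_choose_pochhammer[of x])
        (auto simp: x_def pochhammer_Suc_left[of "x + 1"] pochhammer_Suc_left[of "x + 2"])
    subgoal by (subst of_nat_choose_pochhammer[of "x + 2"])
        (auto simp: x_def pochhammer_Suc_right[of "x + 2 + of_nat i"] pochhammer_Suc_right[of "x + 3 + of_nat i"])
    done
  define F :: rat where "F = fact (k + 1)"
  have fact_k: "fact k = F / (of_nat i + 2)"
    unfolding F_def Suc by (simp add: field_simps)
  have "F \<noteq> 0" "(of_nat i + 2 :: rat) \<noteq> 0"
    unfolding F_def by (simp_all add: add_nonneg_pos)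
  then show ?thesis
    unfolding delannoy_term_def n_minus_1 binomials x_def[symmetric] fact_k F_def[symmetric]
    by (simp add: field_simps; simp add: algebra_simps)
qed

lemma delannoy_eq_sum:
  assumes "M > n"
  shows "(of_nat (delannoy n) :: rat) = (\<Sum>k<M. delannoy_term n k)"
proof -
  have "(of_nat (delannoy n) :: rat) = (\<Sum>k<Suc n. delannoy_term n k)"
    unfolding delannoy_def delannoy_term_def by (simp add: of_nat_sum atLeast0AtMost lessThan_Suc_atMost)
  also have "\<dots> = (\<Sum>k<M. delannoy_term n k)"
    using assms by (intro sum_lessThan_vanishing_tail[symmetric]) (auto simp: delannoy_term_def)
  finally show ?thesis .
qed

lemma delannoy_rec:
  assumes "n \<ge> 1"
  shows "(of_nat n + 1) * (of_nat (delannoy (n + 1)) :: rat)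
     = 3 * (2 * of_nat n + 1) * of_nat (delannoy n) - of_nat n * of_nat (delannoy (n - 1))"
proof -
  define M where "M = n + 3"
  define x :: rat where "x = of_nat n"
  have "(x + 1) * (\<Sum>k<Suc M. delannoy_term (n + 1) k)
      = (x + 1) + (\<Sum>k<M. (x + 1) * delannoy_term (n + 1) (k + 1))"
    by (subst sum.lessThan_Suc_shift) (simp add: sum_distrib_left algebra_simps)
  also have "(\<Sum>k<M. (x + 1) * delannoy_term (n + 1) (k + 1))
     = (\<Sum>k<M. (2 * x + 1) * 2 * delannoy_term n k + (2 * x + 1) * delannoy_term n (Suc k)
          - x * delannoy_term (n - 1) (Suc k))"
    by (rule sum.cong) (use delannoy_term_rec[OF assms] in \<open>auto simp: x_def algebra_simps\<close>)
  also have "\<dots> = (2 * x + 1) * 2 * (\<Sum>k<M. delannoy_term n k)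
       + (2 * x + 1) * (\<Sum>k<M. delannoy_term n (Suc k)) - x * (\<Sum>k<M. delannoy_term (n - 1) (Suc k))"
    by (simp add: sum.distrib sum_subtractf sum_distrib_left)
  also have "(\<Sum>k<M. delannoy_term n (Suc k)) = (\<Sum>k<Suc M. delannoy_term n k) - 1"
    by (subst sum.lessThan_Suc_shift) simp
  also have "(\<Sum>k<M. delannoy_term (n - 1) (Suc k)) = (\<Sum>k<Suc M. delannoy_term (n - 1) k) - 1"
    by (subst sum.lessThan_Suc_shift) simp
  finally show ?thesis
    using delannoy_eq_sum[of n M] delannoy_eq_sum[of n "Suc M"] delannoy_eq_sum[of "n + 1" "Suc M"]
      delannoy_eq_sum[of "n - 1" "Suc M"]
    by (simp add: M_def x_def algebra_simps)
qed

definition delannoy_sq_coeff :: "nat \<Rightarrow> nat \<Rightarrow> rat" where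
  "delannoy_sq_coeff n j = of_nat (n choose j) * of_nat (n + j choose j) * of_nat (2 * j choose j)"

definition delannoy_prod_coeff :: "nat \<Rightarrow> nat \<Rightarrow> rat" where
  "delannoy_prod_coeff n j = of_nat (n - 1 choose j) * of_nat (n + j choose j) * of_nat (2 * j choose j)"

lemma delannoy_sq_coeff_0 [simp]: "delannoy_sq_coeff n 0 = 1"
  by (simp add: delannoy_sq_coeff_def)

lemma delannoy_prod_coeff_0 [simp]: "delannoy_prod_coeff n 0 = 1"
  by (simp add: delannoy_prod_coeff_def)

lemma delannoy_prod_coeff_rec:
  assumes "n \<ge> 1"
  shows "(of_nat n + 1) * delannoy_prod_coeff (n + 1) j
    = (2 * of_nat n + 1) * delannoy_sq_coeff n j - of_nat n * delannoy_prod_coeff n j"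
proof (cases j)
  case 0
  then show ?thesis by (simp add: algebra_simps)
next
  case (Suc i)
  define x :: rat where "x = of_nat n"
  have x_minus_1: "of_nat (n - 1) = x - 1" "of_nat (n - Suc 0) = x - 1"
    using assms by (simp_all add: x_def of_nat_diff)
  define Q where "Q = pochhammer (x - of_nat i) i"
  define R where "R = pochhammer (x + 2) i"
  have binomials:
    "of_nat (n choose j) = Q * x / fact j"
    "of_nat (n - 1 choose j) = (x - of_nat i - 1) * Q / fact j"
    "of_nat (n + j choose j) = (x + 1) * R / fact j"
    "of_nat (n + 1 + j choose j) = R * (x + 2 + of_nat i) / fact j"
    unfolding Suc Q_def R_def
    subgoal by (subst of_nat_choose_pochhammer[of "x - of_nat i"]) (auto simp: x_def pochhammer_Suc_right[of x])
    subgoal by (subst of_nat_choose_pochhammer[of "x - of_nat i - 1"])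
        (auto simp: x_minus_1 pochhammer_Suc_left[of "x - of_nat i"])
    subgoal by (subst of_nat_choose_pochhammer[of "x + 1"]) (auto simp: x_def pochhammer_Suc_left[of "x + 2"])
    subgoal by (subst of_nat_choose_pochhammer[of "x + 2"])
        (auto simp: x_def pochhammer_Suc_right[of "x + 2 + of_nat i"])
    done
  show ?thesis
    unfolding delannoy_prod_coeff_def delannoy_sq_coeff_def add_diff_cancel_right' binomials x_def[symmetric]
    by (simp add: field_simps; simp add: algebra_simps)
qed

lemma delannoy_sq_coeff_rec:
  assumes "n \<ge> 1"
  shows "(of_nat n + 1) ^ 2 * delannoy_sq_coeff (n + 1) (j + 1)
     = (2 * of_nat n + 1) * (of_nat n + 1) * (4 * delannoy_prod_coeff (n + 1) j + delannoy_prod_coeff (n + 1) (j + 1))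
       - of_nat n * (2 * of_nat n + 1) * (4 * delannoy_prod_coeff n j + delannoy_prod_coeff n (j + 1))
       + of_nat n ^ 2 * delannoy_sq_coeff (n - 1) (j + 1)"
proof -
  define x :: rat where "x = of_nat n"
  have x_minus_1: "of_nat (n - 1) = x - 1" "of_nat (n - Suc 0) = x - 1"
    using assms by (simp_all add: x_def of_nat_diff)
  have n_minus_1: "n - 1 + (j + 1) = n + j"
    using assms by simp
  define C :: rat where "C = of_nat (2 * j choose j)"
  have central: "of_nat (2 * (j + 1) choose (j + 1)) = 2 * (2 * of_nat j + 1) / (of_nat j + 1) * C"
    unfolding C_def by (rule central_binomial_Suc)
  show ?thesis
  proof (cases j)
    case 0
    then show ?thesis
      unfolding delannoy_prod_coeff_def delannoy_sq_coeff_def n_minus_1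
      by (simp add: x_def[symmetric] x_minus_1 algebra_simps power2_eq_square)
  next
    case (Suc i)
    define Q where "Q = pochhammer (x - of_nat i) i"
    define R where "R = pochhammer (x + 2) i"
    have binomials:
      "of_nat (n choose j) = Q * x / fact j"
      "of_nat (n - 1 choose j) = (x - of_nat i - 1) * Q / fact j"
      "of_nat (n choose (j + 1)) = (x - of_nat i - 1) * Q * x / fact (j + 1)"
      "of_nat (n - 1 choose (j + 1)) = (x - of_nat i - 2) * (x - of_nat i - 1) * Q / fact (j + 1)"
      "of_nat (n + 1 choose (j + 1)) = Q * x * (x + 1) / fact (j + 1)"
      "of_nat (n + 1 + j choose j) = R * (x + 2 + of_nat i) / fact j"
      "of_nat (n + 1 + (j + 1) choose (j + 1))
         = R * (x + 2 + of_nat i) * (x + 3 + of_nat i) / fact (j + 1)"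
      "of_nat (n + j choose j) = (x + 1) * R / fact j"
      "of_nat (n + (j + 1) choose (j + 1)) = (x + 1) * R * (x + 2 + of_nat i) / fact (j + 1)"
      "of_nat (n + j choose (j + 1)) = x * (x + 1) * R / fact (j + 1)"
      unfolding Suc Q_def R_def
      subgoal by (subst of_nat_choose_pochhammer[of "x - of_nat i"]) (auto simp: x_def pochhammer_Suc_right[of x])
      subgoal by (subst of_nat_choose_pochhammer[of "x - of_nat i - 1"])
          (auto simp: x_minus_1 pochhammer_Suc_left[of "x - of_nat i"])
      subgoal by (subst of_nat_choose_pochhammer[of "x - of_nat i - 1"])
          (auto simp: x_def pochhammer_Suc_right[of x] pochhammer_Suc_left[of "x - of_nat i"])
      subgoal by (subst of_nat_choose_pochhammer[of "x - of_nat i - 2"])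
          (auto simp: x_minus_1 pochhammer_Suc_left[of "x - of_nat i - 1"] pochhammer_Suc_left[of "x - of_nat i"])
      subgoal by (subst of_nat_choose_pochhammer[of "x - of_nat i"])
          (auto simp: x_def pochhammer_Suc_right[of x] pochhammer_Suc_right[of "x + 1"])
      subgoal by (subst of_nat_choose_pochhammer[of "x + 2"])
          (auto simp: x_def pochhammer_Suc_right[of "x + 2 + of_nat i"])
      subgoal by (subst of_nat_choose_pochhammer[of "x + 2"])
          (auto simp: x_def pochhammer_Suc_right[of "x + 2 + of_nat i"] pochhammer_Suc_right[of "x + 3 + of_nat i"])
      subgoal by (subst of_nat_choose_pochhammer[of "x + 1"]) (auto simp: x_def pochhammer_Suc_left[of "x + 2"])
      subgoal by (subst of_nat_choose_pochhammer[of "x + 1"])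
          (auto simp: x_def pochhammer_Suc_left[of "x + 2"] pochhammer_Suc_right[of "x + 2 + of_nat i"])
      subgoal by (subst of_nat_choose_pochhammer[of x])
          (auto simp: x_def pochhammer_Suc_left[of "x + 1"] pochhammer_Suc_left[of "x + 2"])
      done
    define F :: rat where "F = fact (j + 1)"
    have fact_j: "fact j = F / (of_nat i + 2)"
      unfolding Suc F_def by (simp add: field_simps)
    have of_nat_j: "(of_nat j :: rat) = of_nat i + 1"
      unfolding Suc by simp
    have "F \<noteq> 0" "(of_nat i + 2 :: rat) \<noteq> 0" "(2 + of_nat i :: rat) \<noteq> 0"
      unfolding F_def by (simp_all add: add_nonneg_pos)
    then show ?thesis
      unfolding delannoy_prod_coeff_def delannoy_sq_coeff_def add_diff_cancel_right' n_minus_1 binomials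
        central C_def[symmetric] x_def[symmetric] fact_j F_def[symmetric] of_nat_j
      by (simp add: divide_simps; simp add: algebra_simps power2_eq_square)
  qed
qed

definition delannoy_sq_sum :: "nat \<Rightarrow> rat" where
  "delannoy_sq_sum n = pow2_sum (delannoy_sq_coeff n) (n + 1)"

definition delannoy_prod_sum :: "nat \<Rightarrow> rat" where
  "delannoy_prod_sum n = 3 * pow2_sum (delannoy_prod_coeff n) (n + 1)"

lemma pow2_sum_delannoy_sq_coeff:
  "M \<ge> n + 1 \<Longrightarrow> pow2_sum (delannoy_sq_coeff n) M = delannoy_sq_sum n"
  unfolding delannoy_sq_sum_def by (rule pow2_sum_vanishing_tail) (auto simp: delannoy_sq_coeff_def)

lemma pow2_sum_delannoy_prod_coeff:
  "n \<ge> 1 \<Longrightarrow> M \<ge> n + 1 \<Longrightarrow> 3 * pow2_sum (delannoy_prod_coeff n) M = delannoy_prod_sum n"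
  unfolding delannoy_prod_sum_def
  using pow2_sum_vanishing_tail[of n "delannoy_prod_coeff n" M]
    pow2_sum_vanishing_tail[of n "delannoy_prod_coeff n" "n + 1"]
  by (auto simp: delannoy_prod_coeff_def)

lemma delannoy_prod_sum_rec:
  assumes "n \<ge> 1"
  shows "(of_nat n + 1) * delannoy_prod_sum (n + 1)
    = 3 * (2 * of_nat n + 1) * delannoy_sq_sum n - of_nat n * delannoy_prod_sum n"
proof -
  define M where "M = n + 3"
  have prod_sum: "delannoy_prod_sum (n + 1) = 3 * pow2_sum (delannoy_prod_coeff (n + 1)) M"
    using pow2_sum_delannoy_prod_coeff[of "n + 1" M] by (simp add: M_def)
  have "(of_nat n + 1) * delannoy_prod_sum (n + 1)
      = 3 * (\<Sum>j<M. (of_nat n + 1) * delannoy_prod_coeff (n + 1) j * 2 ^ j)"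
    unfolding prod_sum pow2_sum_def sum_distrib_left by (simp add: mult_ac)
  also have "\<dots> = 3 * (\<Sum>j<M. (2 * of_nat n + 1) * (delannoy_sq_coeff n j * 2 ^ j)
      - of_nat n * (delannoy_prod_coeff n j * 2 ^ j))"
  proof -
    have "(of_nat n + 1) * delannoy_prod_coeff (n + 1) j * 2 ^ j
      = (2 * of_nat n + 1) * (delannoy_sq_coeff n j * 2 ^ j) - of_nat n * (delannoy_prod_coeff n j * 2 ^ j)"
      for j
      using arg_cong[OF delannoy_prod_coeff_rec[OF assms, of j], of "\<lambda>t. t * 2 ^ j"]
      by (simp add: algebra_simps)
    then show ?thesis by simp
  qed
  also have "\<dots> = 3 * (2 * of_nat n + 1) * pow2_sum (delannoy_sq_coeff n) M
      - of_nat n * (3 * pow2_sum (delannoy_prod_coeff n) M)"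
    by (simp add: pow2_sum_def sum_subtractf sum_distrib_left algebra_simps)
  finally show ?thesis
    using pow2_sum_delannoy_sq_coeff[of n M] pow2_sum_delannoy_prod_coeff[of n M] assms
    by (simp add: M_def)
qed

lemma delannoy_sq_sum_rec:
  assumes "n \<ge> 1"
  shows "(of_nat n + 1) ^ 2 * delannoy_sq_sum (n + 1)
    = 3 * (2 * of_nat n + 1) * (of_nat n + 1) * delannoy_prod_sum (n + 1)
      - 3 * of_nat n * (2 * of_nat n + 1) * delannoy_prod_sum n + of_nat n ^ 2 * delannoy_sq_sum (n - 1)"
proof -
  define M where "M = n + 3"
  define x :: rat where "x = of_nat n"
  have "(x + 1) ^ 2 * delannoy_sq_sum (n + 1) = (x + 1) ^ 2 * pow2_sum (delannoy_sq_coeff (n + 1)) (Suc M)"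
    using pow2_sum_delannoy_sq_coeff[of "n + 1" "Suc M"] by (simp add: M_def)
  also have "\<dots> = (x + 1) ^ 2 + (\<Sum>j<M. (x + 1) ^ 2 * delannoy_sq_coeff (n + 1) (Suc j) * 2 ^ Suc j)"
    unfolding pow2_sum_def
    by (subst sum.lessThan_Suc_shift) (simp add: sum_distrib_left distrib_left mult_ac)
  also have "(\<Sum>j<M. (x + 1) ^ 2 * delannoy_sq_coeff (n + 1) (Suc j) * 2 ^ Suc j)
     = (\<Sum>j<M. (2 * x + 1) * (x + 1) * 8 * (delannoy_prod_coeff (n + 1) j * 2 ^ j)
            + (2 * x + 1) * (x + 1) * (delannoy_prod_coeff (n + 1) (Suc j) * 2 ^ Suc j)
            - x * (2 * x + 1) * 8 * (delannoy_prod_coeff n j * 2 ^ j)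
            - x * (2 * x + 1) * (delannoy_prod_coeff n (Suc j) * 2 ^ Suc j)
            + x ^ 2 * (delannoy_sq_coeff (n - 1) (Suc j) * 2 ^ Suc j))"
  proof (rule sum.cong)
    fix j
    show "(x + 1) ^ 2 * delannoy_sq_coeff (n + 1) (Suc j) * 2 ^ Suc j
      = (2 * x + 1) * (x + 1) * 8 * (delannoy_prod_coeff (n + 1) j * 2 ^ j)
        + (2 * x + 1) * (x + 1) * (delannoy_prod_coeff (n + 1) (Suc j) * 2 ^ Suc j)
        - x * (2 * x + 1) * 8 * (delannoy_prod_coeff n j * 2 ^ j)
        - x * (2 * x + 1) * (delannoy_prod_coeff n (Suc j) * 2 ^ Suc j)
        + x ^ 2 * (delannoy_sq_coeff (n - 1) (Suc j) * 2 ^ Suc j)"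
      using arg_cong[OF delannoy_sq_coeff_rec[OF assms, of j], of "\<lambda>t. t * 2 ^ Suc j"]
      unfolding x_def by (simp add: algebra_simps)
  qed simp
  also have "\<dots> = (2 * x + 1) * (x + 1) * 8 * pow2_sum (delannoy_prod_coeff (n + 1)) M
            + (2 * x + 1) * (x + 1) * (\<Sum>j<M. delannoy_prod_coeff (n + 1) (Suc j) * 2 ^ Suc j)
            - x * (2 * x + 1) * 8 * pow2_sum (delannoy_prod_coeff n) M
            - x * (2 * x + 1) * (\<Sum>j<M. delannoy_prod_coeff n (Suc j) * 2 ^ Suc j)
            + x ^ 2 * (\<Sum>j<M. delannoy_sq_coeff (n - 1) (Suc j) * 2 ^ Suc j)"
    unfolding pow2_sum_def by (simp add: sum.distrib sum_subtractf sum_distrib_left)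
  also have "\<dots> = (2 * x + 1) * (x + 1) * 8 * pow2_sum (delannoy_prod_coeff (n + 1)) M
            + (2 * x + 1) * (x + 1) * (pow2_sum (delannoy_prod_coeff (n + 1)) (Suc M) - 1)
            - x * (2 * x + 1) * 8 * pow2_sum (delannoy_prod_coeff n) M
            - x * (2 * x + 1) * (pow2_sum (delannoy_prod_coeff n) (Suc M) - 1)
            + x ^ 2 * (pow2_sum (delannoy_sq_coeff (n - 1)) (Suc M) - 1)"
    by (simp only: pow2_sum_Suc_shift delannoy_prod_coeff_0 delannoy_sq_coeff_0)
  also have "\<dots> = (2 * x + 1) * (x + 1) * 8 * (delannoy_prod_sum (n + 1) / 3)
            + (2 * x + 1) * (x + 1) * (delannoy_prod_sum (n + 1) / 3 - 1)
            - x * (2 * x + 1) * 8 * (delannoy_prod_sum n / 3)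
            - x * (2 * x + 1) * (delannoy_prod_sum n / 3 - 1)
            + x ^ 2 * (delannoy_sq_sum (n - 1) - 1)"
  proof -
    have prod: "pow2_sum (delannoy_prod_coeff m) N = delannoy_prod_sum m / 3" if "m \<ge> 1" "N \<ge> m + 1" for m N
      using pow2_sum_delannoy_prod_coeff[OF that] by simp
    have "pow2_sum (delannoy_prod_coeff (n + 1)) M = delannoy_prod_sum (n + 1) / 3"
      "pow2_sum (delannoy_prod_coeff (n + 1)) (Suc M) = delannoy_prod_sum (n + 1) / 3"
      "pow2_sum (delannoy_prod_coeff n) M = delannoy_prod_sum n / 3"
      "pow2_sum (delannoy_prod_coeff n) (Suc M) = delannoy_prod_sum n / 3"
      "pow2_sum (delannoy_sq_coeff (n - 1)) (Suc M) = delannoy_sq_sum (n - 1)"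
      using prod pow2_sum_delannoy_sq_coeff assms by (simp_all add: M_def)
    then show ?thesis by (simp only:)
  qed
  finally show ?thesis
    unfolding x_def by (simp add: algebra_simps power2_eq_square)
qed

lemma delannoy_sq_and_prod_sums:
  shows "of_nat (delannoy n) ^ 2 = delannoy_sq_sum n"
    and "n \<ge> 1 \<Longrightarrow> of_nat (delannoy n) * of_nat (delannoy (n - 1)) = delannoy_prod_sum n"
proof -
  have sums: "delannoy_sq_sum n = of_nat (delannoy n) ^ 2
      \<and> delannoy_prod_sum (n + 1) = of_nat (delannoy n) * of_nat (delannoy (n + 1))" for n
  proof (rule square_and_product_by_recurrence
      [where u = "\<lambda>n. of_nat (delannoy n) :: rat" and P = "\<lambda>n. delannoy_prod_sum (n + 1)"
        and a = "\<lambda>n. of_nat n + 1" and b = "\<lambda>n. 3 * (2 * of_nat n + 1)" and c = of_nat and m = 1])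
    show "(of_nat n + 1) * of_nat (delannoy (n + 1)) = (3 :: rat) * (2 * of_nat n + 1) * of_nat (delannoy n)
        - of_nat n * of_nat (delannoy (n - 1))" if "n \<ge> 1" for n :: nat
      using delannoy_rec[OF that] by simp
    show "(of_nat n + 1) * delannoy_prod_sum (n + 1) = 3 * (2 * of_nat n + 1) * delannoy_sq_sum n
        - of_nat n * delannoy_prod_sum (n - 1 + 1)" if "n \<ge> 1" for n :: nat
      using delannoy_prod_sum_rec[OF that] that by simp
    show "(of_nat n + 1) ^ 2 * delannoy_sq_sum (n + 1)
        = (of_nat n + 1) * (3 * (2 * of_nat n + 1)) * delannoy_prod_sum (n + 1)
          - 3 * (2 * of_nat n + 1) * of_nat n * delannoy_prod_sum (n - 1 + 1)
          + of_nat n ^ 2 * delannoy_sq_sum (n - 1)" if "n \<ge> 1" for n :: nat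
      using delannoy_sq_sum_rec[OF that] that by (simp add: algebra_simps)
  qed (auto simp: delannoy_sq_sum_def delannoy_prod_sum_def pow2_sum_def delannoy_def
      delannoy_sq_coeff_def delannoy_prod_coeff_def numeral_eq_Suc add_pos_nonneg)
  show "of_nat (delannoy n) ^ 2 = delannoy_sq_sum n"
    using sums[of n] by simp
  show "n \<ge> 1 \<Longrightarrow> of_nat (delannoy n) * of_nat (delannoy (n - 1)) = delannoy_prod_sum n"
    using sums[of "n - 1"] by (simp add: mult.commute)
qed

section \<open>Little Schroeder numbers\<close>

text \<open>The truncated subtraction \<open>k - 1\<close> in the definition of \<^const>\<open>narayana\<close> makes
  \<open>narayana m 0 = 1 / m\<close>; the extension by zero is the Narayana number of the paper.\<close>

definition narayana_ext :: "nat \<Rightarrow> nat \<Rightarrow> rat" where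
  "narayana_ext m k = (if k = 0 then 0 else narayana m k)"

lemma narayana_ext_0 [simp]: "narayana_ext m 0 = 0"
  by (simp add: narayana_ext_def)

lemma narayana_ext_eq_0: "k > m \<Longrightarrow> narayana_ext m k = 0"
  by (simp add: narayana_ext_def narayana_def)

lemma narayana_symmetric:
  assumes "1 \<le> k" "k \<le> m"
  shows "narayana m (m + 1 - k) = narayana m k"
proof -
  have "m choose (m + 1 - k) = m choose (k - 1)" "m choose (m + 1 - k - 1) = m choose k"
    using assms binomial_symmetric[of "k - 1" m] binomial_symmetric[of k m] by simp_all
  then show ?thesis by (simp add: narayana_def)
qed

lemma double_schroeder_eq_pow2_sum:
  assumes "L > m"
  shows "2 * schroeder_s m = pow2_sum (narayana_ext m) L"
proof -
  have "2 * schroeder_s m = (\<Sum>k=1..m. 2 * (narayana m (m + 1 - k) * 2 ^ (m - (m + 1 - k))))"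
    unfolding schroeder_s_def sum_distrib_left by (subst sum.atLeastAtMost_rev) simp
  also have "\<dots> = (\<Sum>k=1..m. narayana_ext m k * 2 ^ k)"
  proof (rule sum.cong)
    fix k assume "k \<in> {1..m}"
    then have "narayana m (m + 1 - k) = narayana m k" "2 * 2 ^ (m - (m + 1 - k)) = (2 :: rat) ^ k"
      using narayana_symmetric[of k m] by (auto simp: power_Suc[symmetric])
    then show "2 * (narayana m (m + 1 - k) * 2 ^ (m - (m + 1 - k))) = narayana_ext m k * 2 ^ k"
      using \<open>k \<in> {1..m}\<close> by (simp add: narayana_ext_def)
  qed simp
  also have "\<dots> = (\<Sum>k<Suc m. narayana_ext m k * 2 ^ k)"
    by (simp add: lessThan_Suc_atMost atLeast0AtMost[symmetric] sum.atLeast_Suc_atMost[of 0 m])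
  also have "\<dots> = pow2_sum (narayana_ext m) L"
    unfolding pow2_sum_def using assms
    by (intro sum_lessThan_vanishing_tail[symmetric]) (auto simp: narayana_ext_eq_0)
  finally show ?thesis .
qed

lemma narayana_ext_rec:
  assumes "n \<ge> 2"
  shows "(of_nat n + 2) * narayana_ext (n + 1) k
    = (2 * of_nat n + 1) * (narayana_ext n k + narayana_ext n (k - 1))
      - (of_nat n - 1) * (narayana_ext (n - 1) k - 2 * narayana_ext (n - 1) (k - 1)
          + narayana_ext (n - 1) (k - 2))"
proof -
  define x :: rat where "x = of_nat n"
  have x_eqs: "of_nat (n - 1) = x - 1" "of_nat (n - Suc 0) = x - 1" "of_nat (n + 1) = x + 1" "of_nat n = x"
    using assms by (simp_all add: x_def of_nat_diff)
  have nonzero: "x \<noteq> 0" "x - 1 \<noteq> 0" "x + 1 \<noteq> 0" "x + 2 \<noteq> 0" "n - 1 \<noteq> 0"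
    using assms by (simp_all add: x_def)
  have "k = 0 \<or> k = 1 \<or> k = 2 \<or> (\<exists>l. k = l + 3)"
    by presburger
  then consider "k = 0" | "k = 1" | "k = 2" | l where "k = l + 3"
    by blast
  then show ?thesis
  proof cases
    case 1
    then show ?thesis by simp
  next
    case 2
    then show ?thesis using nonzero by (simp add: narayana_ext_def narayana_def x_eqs field_simps)
  next
    case 3
    then show ?thesis
      using nonzero by (simp add: narayana_ext_def narayana_def of_nat_choose_two x_eqs field_simps)
  next
    case 4
    define Q where "Q = pochhammer (x - of_nat l) l"
    have binomials:
      "of_nat (n - 1 choose l) = Q / fact l"
      "of_nat (n - 1 choose (l + 1)) = (x - of_nat l - 1) * Q / fact (l + 1)"
      "of_nat (n - 1 choose (l + 2)) = (x - of_nat l - 2) * (x - of_nat l - 1) * Q / fact (l + 2)"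
      "of_nat (n - 1 choose (l + 3))
         = (x - of_nat l - 3) * (x - of_nat l - 2) * (x - of_nat l - 1) * Q / fact (l + 3)"
      "of_nat (n choose (l + 1)) = Q * x / fact (l + 1)"
      "of_nat (n choose (l + 2)) = (x - of_nat l - 1) * Q * x / fact (l + 2)"
      "of_nat (n choose (l + 3)) = (x - of_nat l - 2) * (x - of_nat l - 1) * Q * x / fact (l + 3)"
      "of_nat (n + 1 choose (l + 2)) = Q * x * (x + 1) / fact (l + 2)"
      "of_nat (n + 1 choose (l + 3)) = (x - of_nat l - 1) * Q * x * (x + 1) / fact (l + 3)"
      unfolding Q_def
      subgoal by (subst of_nat_choose_pochhammer[of "x - of_nat l"]) (auto simp: x_eqs)
      subgoal by (subst of_nat_choose_pochhammer[of "x - of_nat l - 1"])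
          (auto simp: x_eqs pochhammer_Suc_left[of "x - of_nat l"])
      subgoal by (subst of_nat_choose_pochhammer[of "x - of_nat l - 2"])
          (auto simp: x_eqs pochhammer_Suc_left[of "x - of_nat l"] pochhammer_Suc_left[of "x - of_nat l - 1"]
            numeral_2_eq_2)
      subgoal by (subst of_nat_choose_pochhammer[of "x - of_nat l - 3"])
          (auto simp: x_eqs pochhammer_Suc_left[of "x - of_nat l"] pochhammer_Suc_left[of "x - of_nat l - 1"]
            pochhammer_Suc_left[of "x - of_nat l - 2"] numeral_3_eq_3)
      subgoal by (subst of_nat_choose_pochhammer[of "x - of_nat l"]) (auto simp: x_eqs pochhammer_Suc_right[of x])
      subgoal by (subst of_nat_choose_pochhammer[of "x - of_nat l - 1"])
          (auto simp: x_eqs pochhammer_Suc_right[of x] pochhammer_Suc_left[of "x - of_nat l"] numeral_2_eq_2)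
      subgoal by (subst of_nat_choose_pochhammer[of "x - of_nat l - 2"])
          (auto simp: x_eqs pochhammer_Suc_right[of x] pochhammer_Suc_left[of "x - of_nat l"]
            pochhammer_Suc_left[of "x - of_nat l - 1"] numeral_3_eq_3)
      subgoal by (subst of_nat_choose_pochhammer[of "x - of_nat l"])
          (auto simp: x_eqs pochhammer_Suc_right[of x] pochhammer_Suc_right[of "x + 1"] numeral_2_eq_2)
      subgoal by (subst of_nat_choose_pochhammer[of "x - of_nat l - 1"])
          (auto simp: x_eqs pochhammer_Suc_right[of x] pochhammer_Suc_right[of "x + 1"]
            pochhammer_Suc_left[of "x - of_nat l"] numeral_3_eq_3)
      done
    define F :: rat where "F = fact (l + 3)"
    have l_nonzero: "(of_nat l + 3 :: rat) \<noteq> 0" "(of_nat l + 2 :: rat) \<noteq> 0" "(of_nat l + 1 :: rat) \<noteq> 0"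
      by (simp_all add: add_nonneg_pos)
    have factorials:
      "fact (l + 2) = F / (of_nat l + 3)"
      "fact (l + 1) = F / ((of_nat l + 3) * (of_nat l + 2))"
      "fact l = F / ((of_nat l + 3) * (of_nat l + 2) * (of_nat l + 1))"
      by (rule eq_divide_imp, use l_nonzero in simp,
          simp add: F_def numeral_3_eq_3 numeral_2_eq_2 algebra_simps)+
    have shifts: "l + 3 - 1 = l + 2" "l + 3 - 2 = l + 1" "l + 2 - 1 = l + 1" "l + 1 - 1 = l"
      "(l + 3 = 0) = False" "(l + 2 = 0) = False" "(l + 1 = 0) = False"
      by simp_all
    have "F \<noteq> 0" unfolding F_def by simp
    then show ?thesis
      unfolding 4 narayana_ext_def narayana_def shifts if_False binomials x_eqs factorials F_def[symmetric]
      using nonzero l_nonzero by (simp add: divide_simps; simp add: algebra_simps)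
  qed
qed

lemma schroeder_rec:
  assumes "n \<ge> 2"
  shows "(of_nat n + 2) * schroeder_s (n + 1)
    = 3 * (2 * of_nat n + 1) * schroeder_s n - (of_nat n - 1) * schroeder_s (n - 1)"
proof -
  define K where "K = n + 2"
  define x :: rat where "x = of_nat n"
  have sums:
    "pow2_sum (narayana_ext (n + 1)) (Suc (Suc K)) = 2 * schroeder_s (n + 1)"
    "pow2_sum (narayana_ext n) (Suc (Suc K)) = 2 * schroeder_s n"
    "pow2_sum (narayana_ext n) (Suc K) = 2 * schroeder_s n"
    "pow2_sum (narayana_ext (n - 1)) (Suc (Suc K)) = 2 * schroeder_s (n - 1)"
    "pow2_sum (narayana_ext (n - 1)) (Suc K) = 2 * schroeder_s (n - 1)"
    "pow2_sum (narayana_ext (n - 1)) K = 2 * schroeder_s (n - 1)"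
    unfolding K_def using assms by (auto intro!: double_schroeder_eq_pow2_sum[symmetric])
  have "(x + 2) * pow2_sum (narayana_ext (n + 1)) (Suc (Suc K))
      = (\<Sum>k<Suc (Suc K). (x + 2) * narayana_ext (n + 1) k * 2 ^ k)"
    by (simp only: pow2_sum_def sum_distrib_left mult.assoc)
  also have "\<dots> = (\<Sum>k<Suc (Suc K). (2 * x + 1) * (narayana_ext n k * 2 ^ k)
      + (2 * x + 1) * (narayana_ext n (k - 1) * 2 ^ k)
      - (x - 1) * (narayana_ext (n - 1) k * 2 ^ k)
      + 2 * (x - 1) * (narayana_ext (n - 1) (k - 1) * 2 ^ k)
      - (x - 1) * (narayana_ext (n - 1) (k - 2) * 2 ^ k))"
  proof -
    have "(x + 2) * narayana_ext (n + 1) k * 2 ^ k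
      = (2 * x + 1) * (narayana_ext n k * 2 ^ k) + (2 * x + 1) * (narayana_ext n (k - 1) * 2 ^ k)
        - (x - 1) * (narayana_ext (n - 1) k * 2 ^ k) + 2 * (x - 1) * (narayana_ext (n - 1) (k - 1) * 2 ^ k)
        - (x - 1) * (narayana_ext (n - 1) (k - 2) * 2 ^ k)" for k
      using arg_cong[OF narayana_ext_rec[OF assms, of k], of "\<lambda>t. t * 2 ^ k"] unfolding x_def
      by (simp add: algebra_simps)
    then show ?thesis by simp
  qed
  also have "\<dots> = (2 * x + 1) * pow2_sum (narayana_ext n) (Suc (Suc K))
      + (2 * x + 1) * (\<Sum>k<Suc (Suc K). narayana_ext n (k - 1) * 2 ^ k)
      - (x - 1) * pow2_sum (narayana_ext (n - 1)) (Suc (Suc K))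
      + 2 * (x - 1) * (\<Sum>k<Suc (Suc K). narayana_ext (n - 1) (k - 1) * 2 ^ k)
      - (x - 1) * (\<Sum>k<Suc (Suc K). narayana_ext (n - 1) (k - 2) * 2 ^ k)"
    unfolding pow2_sum_def by (simp add: sum.distrib sum_subtractf sum_distrib_left del: sum.lessThan_Suc)
  also have "\<dots> = (2 * x + 1) * pow2_sum (narayana_ext n) (Suc (Suc K))
      + (2 * x + 1) * (2 * pow2_sum (narayana_ext n) (Suc K))
      - (x - 1) * pow2_sum (narayana_ext (n - 1)) (Suc (Suc K))
      + 2 * (x - 1) * (2 * pow2_sum (narayana_ext (n - 1)) (Suc K))
      - (x - 1) * (4 * pow2_sum (narayana_ext (n - 1)) K)"
    by (simp only: pow2_sum_pred_shift pow2_sum_pred2_shift narayana_ext_0)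
  finally show ?thesis
    unfolding sums x_def by (simp add: algebra_simps)
qed

lemma schroeder_s_1: "schroeder_s 1 = 1"
  by (simp add: schroeder_s_def narayana_def)

lemma schroeder_s_2: "schroeder_s 2 = 3"
  by (simp add: schroeder_s_def narayana_def numeral_eq_Suc)

definition catalan :: "nat \<Rightarrow> rat" where
  "catalan j = of_nat (2 * j choose j) / (of_nat j + 1)"

definition catalan_quot :: "nat \<Rightarrow> rat" where
  "catalan_quot j = catalan (j + 1) / (of_nat j + 1)"

lemma catalan_quot_0 [simp]: "catalan_quot 0 = 1"
  by (simp add: catalan_quot_def catalan_def numeral_eq_Suc)

lemma catalan_quot_Suc:
  "catalan_quot (j + 1)
     = catalan_quot j * (2 * (2 * of_nat j + 3) * (of_nat j + 1)) / ((of_nat j + 2) * (of_nat j + 3))"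
proof -
  have "(of_nat j + 1 :: rat) \<noteq> 0" "(of_nat j + 2 :: rat) \<noteq> 0" "(of_nat j + 3 :: rat) \<noteq> 0"
    by (simp_all add: add_nonneg_pos)
  then show ?thesis
    unfolding catalan_quot_def catalan_def central_binomial_Suc[of "j + 1"]
    by (simp add: divide_simps; simp add: algebra_simps)
qed

definition schroeder_sq_coeff :: "nat \<Rightarrow> nat \<Rightarrow> rat" where
  "schroeder_sq_coeff n j = of_nat (n - 1 choose j) * of_nat (n + j + 1 choose j) * catalan_quot j"

definition schroeder_prod_coeff :: "nat \<Rightarrow> nat \<Rightarrow> rat" where
  "schroeder_prod_coeff n j = of_nat (n - 1 choose j) * of_nat (n + j + 2 choose j) * catalan_quot j"

lemma schroeder_sq_coeff_0 [simp]: "schroeder_sq_coeff n 0 = 1"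
  by (simp add: schroeder_sq_coeff_def)

lemma schroeder_prod_coeff_0 [simp]: "schroeder_prod_coeff n 0 = 1"
  by (simp add: schroeder_prod_coeff_def)

lemma schroeder_prod_coeff_rec:
  assumes "n \<ge> 2"
  shows "(of_nat n + 2) * schroeder_prod_coeff n j
    = (2 * of_nat n + 1) * schroeder_sq_coeff n j - (of_nat n - 1) * schroeder_prod_coeff (n - 1) j"
proof (cases j)
  case 0
  then show ?thesis by (simp add: algebra_simps)
next
  case (Suc i)
  define x :: rat where "x = of_nat n"
  have x_eqs: "of_nat (n - 1) = x - 1" "of_nat (n - Suc 0) = x - 1" "of_nat (n - 2) = x - 2"
    "of_nat (n - Suc (Suc 0)) = x - 2"
    using assms by (simp_all add: x_def of_nat_diff)
  have shifts: "n - 1 - 1 = n - 2" "n - 1 + j + 2 = n + j + 1"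
    using assms by simp_all
  define Q where "Q = pochhammer (x - of_nat i - 1) i"
  define R where "R = pochhammer (x + 3) i"
  have binomials:
    "of_nat (n - 1 choose j) = Q * (x - 1) / fact j"
    "of_nat (n - 2 choose j) = (x - of_nat i - 2) * Q / fact j"
    "of_nat (n + j + 2 choose j) = R * (x + 3 + of_nat i) / fact j"
    "of_nat (n + j + 1 choose j) = (x + 2) * R / fact j"
    unfolding Suc Q_def R_def
    subgoal by (subst of_nat_choose_pochhammer[of "x - of_nat i - 1"])
        (auto simp: x_eqs pochhammer_Suc_right[of "x - 1"])
    subgoal by (subst of_nat_choose_pochhammer[of "x - of_nat i - 2"])
        (auto simp: x_eqs pochhammer_Suc_left[of "x - of_nat i - 1"])
    subgoal by (subst of_nat_choose_pochhammer[of "x + 3"])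
        (auto simp: x_def pochhammer_Suc_right[of "x + 3 + of_nat i"])
    subgoal by (subst of_nat_choose_pochhammer[of "x + 2"]) (auto simp: x_def pochhammer_Suc_left[of "x + 3"])
    done
  show ?thesis
    unfolding schroeder_prod_coeff_def schroeder_sq_coeff_def shifts binomials x_def[symmetric]
    by (simp add: divide_simps; simp add: algebra_simps)
qed

lemma schroeder_sq_coeff_rec:
  assumes "n \<ge> 2"
  shows "(of_nat n + 2) ^ 2 * schroeder_sq_coeff (n + 1) (j + 1)
    = (2 * of_nat n + 1) * (of_nat n + 2) * (4 * schroeder_prod_coeff n j + schroeder_prod_coeff n (j + 1))
      - (of_nat n - 1) * (2 * of_nat n + 1)
          * (4 * schroeder_prod_coeff (n - 1) j + schroeder_prod_coeff (n - 1) (j + 1))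
      + (of_nat n - 1) ^ 2 * schroeder_sq_coeff (n - 1) (j + 1)"
proof -
  define x :: rat where "x = of_nat n"
  have x_eqs: "of_nat (n - 1) = x - 1" "of_nat (n - Suc 0) = x - 1" "of_nat (n - 2) = x - 2"
    "of_nat (n - Suc (Suc 0)) = x - 2"
    using assms by (simp_all add: x_def of_nat_diff)
  have shifts: "n + 1 - 1 = n" "n + 1 + (j + 1) + 1 = n + j + 3" "n + (j + 1) + 2 = n + j + 3"
    "n - 1 - 1 = n - 2" "n - 1 + j + 2 = n + j + 1" "n - 1 + (j + 1) + 2 = n + j + 2"
    "n - 1 + (j + 1) + 1 = n + j + 1"
    using assms by simp_all
  define H where "H = catalan_quot j"
  have catalan_quot_next:
    "catalan_quot (j + 1) = H * (2 * (2 * of_nat j + 3) * (of_nat j + 1)) / ((of_nat j + 2) * (of_nat j + 3))"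
    unfolding H_def by (rule catalan_quot_Suc)
  show ?thesis
  proof (cases j)
    case 0
    have "n - 2 + 1 = n - 1"
      using assms by simp
    then show ?thesis
      unfolding schroeder_prod_coeff_def schroeder_sq_coeff_def shifts 0 using assms
      by (simp add: catalan_quot_def catalan_def x_eqs x_def[symmetric] algebra_simps power2_eq_square)
  next
    case (Suc i)
    define Q where "Q = pochhammer (x - of_nat i - 1) i"
    define R where "R = pochhammer (x + 3) i"
    have binomials:
      "of_nat (n - 1 choose j) = Q * (x - 1) / fact j"
      "of_nat (n choose (j + 1)) = Q * (x - 1) * x / fact (j + 1)"
      "of_nat (n - 1 choose (j + 1)) = (x - of_nat i - 2) * Q * (x - 1) / fact (j + 1)"
      "of_nat (n - 2 choose j) = (x - of_nat i - 2) * Q / fact j"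
      "of_nat (n - 2 choose (j + 1)) = (x - of_nat i - 3) * (x - of_nat i - 2) * Q / fact (j + 1)"
      "of_nat (n + j + 3 choose (j + 1)) = R * (x + 3 + of_nat i) * (x + 4 + of_nat i) / fact (j + 1)"
      "of_nat (n + j + 2 choose j) = R * (x + 3 + of_nat i) / fact j"
      "of_nat (n + j + 1 choose j) = (x + 2) * R / fact j"
      "of_nat (n + j + 2 choose (j + 1)) = (x + 2) * R * (x + 3 + of_nat i) / fact (j + 1)"
      "of_nat (n + j + 1 choose (j + 1)) = (x + 1) * (x + 2) * R / fact (j + 1)"
      unfolding Suc Q_def R_def
      subgoal by (subst of_nat_choose_pochhammer[of "x - of_nat i - 1"])
          (auto simp: x_eqs pochhammer_Suc_right[of "x - 1"])
      subgoal by (subst of_nat_choose_pochhammer[of "x - of_nat i - 1"])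
          (auto simp: x_def x_eqs pochhammer_Suc_right[of "x - 1"] pochhammer_Suc_right[of x])
      subgoal by (subst of_nat_choose_pochhammer[of "x - of_nat i - 2"])
          (auto simp: x_eqs pochhammer_Suc_right[of "x - 1"] pochhammer_Suc_left[of "x - of_nat i - 1"])
      subgoal by (subst of_nat_choose_pochhammer[of "x - of_nat i - 2"])
          (auto simp: x_eqs pochhammer_Suc_left[of "x - of_nat i - 1"])
      subgoal by (subst of_nat_choose_pochhammer[of "x - of_nat i - 3"])
          (auto simp: x_eqs pochhammer_Suc_left[of "x - of_nat i - 1"] pochhammer_Suc_left[of "x - of_nat i - 2"])
      subgoal by (subst of_nat_choose_pochhammer[of "x + 3"])
          (auto simp: x_def pochhammer_Suc_right[of "x + 3 + of_nat i"] pochhammer_Suc_right[of "x + 4 + of_nat i"])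
      subgoal by (subst of_nat_choose_pochhammer[of "x + 3"])
          (auto simp: x_def pochhammer_Suc_right[of "x + 3 + of_nat i"])
      subgoal by (subst of_nat_choose_pochhammer[of "x + 2"]) (auto simp: x_def pochhammer_Suc_left[of "x + 3"])
      subgoal by (subst of_nat_choose_pochhammer[of "x + 2"])
          (auto simp: x_def pochhammer_Suc_left[of "x + 3"] pochhammer_Suc_right[of "x + 3 + of_nat i"])
      subgoal by (subst of_nat_choose_pochhammer[of "x + 1"])
          (auto simp: x_def pochhammer_Suc_left[of "x + 2"] pochhammer_Suc_left[of "x + 3"])
      done
    define F :: rat where "F = fact (j + 1)"
    have fact_j: "fact j = F / (of_nat i + 2)"
      unfolding Suc F_def by (simp add: field_simps)
    have of_nat_j: "(of_nat j :: rat) = of_nat i + 1"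
      unfolding Suc by simp
    have "F \<noteq> 0" "(of_nat i + 2 :: rat) \<noteq> 0" "(of_nat i + 3 :: rat) \<noteq> 0" "(of_nat i + 4 :: rat) \<noteq> 0"
      "(2 + of_nat i :: rat) \<noteq> 0" "(3 + of_nat i :: rat) \<noteq> 0" "(4 + of_nat i :: rat) \<noteq> 0"
      unfolding F_def by (simp_all add: add_nonneg_pos add_pos_nonneg)
    then show ?thesis
      unfolding schroeder_prod_coeff_def schroeder_sq_coeff_def shifts binomials catalan_quot_next
        H_def[symmetric] x_def[symmetric] fact_j F_def[symmetric] of_nat_j
      by (simp add: divide_simps; simp add: algebra_simps power2_eq_square)
  qed
qed

definition schroeder_sq_sum :: "nat \<Rightarrow> rat" where
  "schroeder_sq_sum n = pow2_sum (schroeder_sq_coeff n) (n + 1)"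

definition schroeder_prod_sum :: "nat \<Rightarrow> rat" where
  "schroeder_prod_sum n = 3 * pow2_sum (schroeder_prod_coeff n) (n + 1)"

lemma pow2_sum_schroeder_sq_coeff:
  assumes "n \<ge> 1" "M \<ge> n + 1"
  shows "pow2_sum (schroeder_sq_coeff n) M = schroeder_sq_sum n"
proof -
  have "schroeder_sq_coeff n j = 0" if "j \<ge> n" for j
  proof -
    have "n - 1 < j" using assms that by arith
    then show ?thesis by (simp add: schroeder_sq_coeff_def)
  qed
  then have "pow2_sum (schroeder_sq_coeff n) M = pow2_sum (schroeder_sq_coeff n) n"
    "pow2_sum (schroeder_sq_coeff n) (n + 1) = pow2_sum (schroeder_sq_coeff n) n"
    using assms by (simp_all add: pow2_sum_vanishing_tail)
  then show ?thesis by (simp add: schroeder_sq_sum_def)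
qed

lemma pow2_sum_schroeder_prod_coeff:
  assumes "n \<ge> 1" "M \<ge> n + 1"
  shows "pow2_sum (schroeder_prod_coeff n) M = schroeder_prod_sum n / 3"
proof -
  have "schroeder_prod_coeff n j = 0" if "j \<ge> n" for j
  proof -
    have "n - 1 < j" using assms that by arith
    then show ?thesis by (simp add: schroeder_prod_coeff_def)
  qed
  then have "pow2_sum (schroeder_prod_coeff n) M = pow2_sum (schroeder_prod_coeff n) n"
    "pow2_sum (schroeder_prod_coeff n) (n + 1) = pow2_sum (schroeder_prod_coeff n) n"
    using assms by (simp_all add: pow2_sum_vanishing_tail)
  then show ?thesis by (simp add: schroeder_prod_sum_def)
qed

lemma schroeder_prod_sum_rec:
  assumes "n \<ge> 2"
  shows "(of_nat n + 2) * schroeder_prod_sum n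
    = 3 * (2 * of_nat n + 1) * schroeder_sq_sum n - (of_nat n - 1) * schroeder_prod_sum (n - 1)"
proof -
  define M where "M = n + 3"
  have prod_sum: "schroeder_prod_sum n = 3 * pow2_sum (schroeder_prod_coeff n) M"
    using pow2_sum_schroeder_prod_coeff[of n M] assms by (simp add: M_def)
  have "(of_nat n + 2) * schroeder_prod_sum n = 3 * (\<Sum>j<M. (of_nat n + 2) * schroeder_prod_coeff n j * 2 ^ j)"
    unfolding prod_sum pow2_sum_def sum_distrib_left by (simp add: mult_ac)
  also have "\<dots> = 3 * (\<Sum>j<M. (2 * of_nat n + 1) * (schroeder_sq_coeff n j * 2 ^ j)
      - (of_nat n - 1) * (schroeder_prod_coeff (n - 1) j * 2 ^ j))"
  proof -
    have "(of_nat n + 2) * schroeder_prod_coeff n j * 2 ^ j = (2 * of_nat n + 1) * (schroeder_sq_coeff n j * 2 ^ j)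
        - (of_nat n - 1) * (schroeder_prod_coeff (n - 1) j * 2 ^ j)" for j
      using arg_cong[OF schroeder_prod_coeff_rec[OF assms, of j], of "\<lambda>t. t * 2 ^ j"]
      by (simp add: algebra_simps)
    then show ?thesis by simp
  qed
  also have "\<dots> = 3 * ((2 * of_nat n + 1) * pow2_sum (schroeder_sq_coeff n) M
      - (of_nat n - 1) * pow2_sum (schroeder_prod_coeff (n - 1)) M)"
    unfolding pow2_sum_def by (simp only: sum_subtractf sum_distrib_left)
  finally show ?thesis
    using pow2_sum_schroeder_sq_coeff[of n M] pow2_sum_schroeder_prod_coeff[of "n - 1" M] assms
    by (simp add: M_def algebra_simps)
qed

lemma schroeder_sq_sum_rec:
  assumes "n \<ge> 2"
  shows "(of_nat n + 2) ^ 2 * schroeder_sq_sum (n + 1)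
    = 3 * (2 * of_nat n + 1) * (of_nat n + 2) * schroeder_prod_sum n
      - 3 * (of_nat n - 1) * (2 * of_nat n + 1) * schroeder_prod_sum (n - 1)
      + (of_nat n - 1) ^ 2 * schroeder_sq_sum (n - 1)"
proof -
  define M where "M = n + 3"
  define x :: rat where "x = of_nat n"
  have "(x + 2) ^ 2 * schroeder_sq_sum (n + 1) = (x + 2) ^ 2 * pow2_sum (schroeder_sq_coeff (n + 1)) (Suc M)"
    using pow2_sum_schroeder_sq_coeff[of "n + 1" "Suc M"] by (simp add: M_def)
  also have "\<dots> = (x + 2) ^ 2 + (\<Sum>j<M. (x + 2) ^ 2 * schroeder_sq_coeff (n + 1) (Suc j) * 2 ^ Suc j)"
    unfolding pow2_sum_def
    by (subst sum.lessThan_Suc_shift) (simp add: sum_distrib_left distrib_left mult_ac)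
  also have "(\<Sum>j<M. (x + 2) ^ 2 * schroeder_sq_coeff (n + 1) (Suc j) * 2 ^ Suc j)
     = (\<Sum>j<M. (2 * x + 1) * (x + 2) * 8 * (schroeder_prod_coeff n j * 2 ^ j)
            + (2 * x + 1) * (x + 2) * (schroeder_prod_coeff n (Suc j) * 2 ^ Suc j)
            - (x - 1) * (2 * x + 1) * 8 * (schroeder_prod_coeff (n - 1) j * 2 ^ j)
            - (x - 1) * (2 * x + 1) * (schroeder_prod_coeff (n - 1) (Suc j) * 2 ^ Suc j)
            + (x - 1) ^ 2 * (schroeder_sq_coeff (n - 1) (Suc j) * 2 ^ Suc j))"
  proof (rule sum.cong)
    fix j
    show "(x + 2) ^ 2 * schroeder_sq_coeff (n + 1) (Suc j) * 2 ^ Suc j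
      = (2 * x + 1) * (x + 2) * 8 * (schroeder_prod_coeff n j * 2 ^ j)
        + (2 * x + 1) * (x + 2) * (schroeder_prod_coeff n (Suc j) * 2 ^ Suc j)
        - (x - 1) * (2 * x + 1) * 8 * (schroeder_prod_coeff (n - 1) j * 2 ^ j)
        - (x - 1) * (2 * x + 1) * (schroeder_prod_coeff (n - 1) (Suc j) * 2 ^ Suc j)
        + (x - 1) ^ 2 * (schroeder_sq_coeff (n - 1) (Suc j) * 2 ^ Suc j)"
      using arg_cong[OF schroeder_sq_coeff_rec[OF assms, of j], of "\<lambda>t. t * 2 ^ Suc j"]
      unfolding x_def by (simp add: algebra_simps)
  qed simp
  also have "\<dots> = (2 * x + 1) * (x + 2) * 8 * pow2_sum (schroeder_prod_coeff n) M
            + (2 * x + 1) * (x + 2) * (\<Sum>j<M. schroeder_prod_coeff n (Suc j) * 2 ^ Suc j)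
            - (x - 1) * (2 * x + 1) * 8 * pow2_sum (schroeder_prod_coeff (n - 1)) M
            - (x - 1) * (2 * x + 1) * (\<Sum>j<M. schroeder_prod_coeff (n - 1) (Suc j) * 2 ^ Suc j)
            + (x - 1) ^ 2 * (\<Sum>j<M. schroeder_sq_coeff (n - 1) (Suc j) * 2 ^ Suc j)"
    unfolding pow2_sum_def by (simp add: sum.distrib sum_subtractf sum_distrib_left)
  also have "\<dots> = (2 * x + 1) * (x + 2) * 8 * (schroeder_prod_sum n / 3)
            + (2 * x + 1) * (x + 2) * (schroeder_prod_sum n / 3 - 1)
            - (x - 1) * (2 * x + 1) * 8 * (schroeder_prod_sum (n - 1) / 3)
            - (x - 1) * (2 * x + 1) * (schroeder_prod_sum (n - 1) / 3 - 1)
            + (x - 1) ^ 2 * (schroeder_sq_sum (n - 1) - 1)"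
  proof -
    have "pow2_sum (schroeder_prod_coeff n) M = schroeder_prod_sum n / 3"
      "pow2_sum (schroeder_prod_coeff n) (Suc M) = schroeder_prod_sum n / 3"
      "pow2_sum (schroeder_prod_coeff (n - 1)) M = schroeder_prod_sum (n - 1) / 3"
      "pow2_sum (schroeder_prod_coeff (n - 1)) (Suc M) = schroeder_prod_sum (n - 1) / 3"
      "pow2_sum (schroeder_sq_coeff (n - 1)) (Suc M) = schroeder_sq_sum (n - 1)"
      using pow2_sum_schroeder_prod_coeff pow2_sum_schroeder_sq_coeff assms by (simp_all add: M_def)
    then show ?thesis
      by (simp only: pow2_sum_Suc_shift schroeder_prod_coeff_0 schroeder_sq_coeff_0)
  qed
  finally show ?thesis
    unfolding x_def by (simp add: field_simps power2_eq_square; simp add: algebra_simps)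
qed

lemma schroeder_sq_and_prod_sums:
  assumes "n \<ge> 1"
  shows "schroeder_s n ^ 2 = schroeder_sq_sum n"
    and "schroeder_s n * schroeder_s (n + 1) = schroeder_prod_sum n"
proof -
  have "schroeder_sq_sum n = schroeder_s n ^ 2 \<and> schroeder_prod_sum n = schroeder_s n * schroeder_s (n + 1)"
  proof (rule square_and_product_by_recurrence
      [where u = schroeder_s and a = "\<lambda>n. of_nat n + 2" and b = "\<lambda>n. 3 * (2 * of_nat n + 1)"
        and c = "\<lambda>n. of_nat n - 1" and m = 2])
    show "(of_nat n + 2) * schroeder_s (n + 1)
        = 3 * (2 * of_nat n + 1) * schroeder_s n - (of_nat n - 1) * schroeder_s (n - 1)"
      if "n \<ge> 2" for n :: nat
      using schroeder_rec[OF that] .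
    show "(of_nat n + 2) * schroeder_prod_sum n
        = 3 * (2 * of_nat n + 1) * schroeder_sq_sum n - (of_nat n - 1) * schroeder_prod_sum (n - 1)"
      if "n \<ge> 2" for n :: nat
      using schroeder_prod_sum_rec[OF that] .
    show "(of_nat n + 2) ^ 2 * schroeder_sq_sum (n + 1)
        = (of_nat n + 2) * (3 * (2 * of_nat n + 1)) * schroeder_prod_sum n
          - 3 * (2 * of_nat n + 1) * (of_nat n - 1) * schroeder_prod_sum (n - 1)
          + (of_nat n - 1) ^ 2 * schroeder_sq_sum (n - 1)" if "n \<ge> 2" for n :: nat
      using schroeder_sq_sum_rec[OF that] by (simp add: algebra_simps)
  next
    have "schroeder_sq_sum 1 = 1" "schroeder_sq_sum 2 = 9" "schroeder_prod_sum 1 = 3"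
      by (simp_all add: schroeder_sq_sum_def schroeder_prod_sum_def pow2_sum_def schroeder_sq_coeff_def
          schroeder_prod_coeff_def catalan_quot_def catalan_def numeral_eq_Suc)
    then show "schroeder_sq_sum (2 - 1) = schroeder_s (2 - 1) ^ 2" "schroeder_sq_sum 2 = schroeder_s 2 ^ 2"
      "schroeder_prod_sum (2 - 1) = schroeder_s (2 - 1) * schroeder_s 2"
      by (simp_all add: schroeder_s_1[unfolded One_nat_def] schroeder_s_2)
  qed (use assms in \<open>simp_all add: add_pos_nonneg\<close>)
  then show "schroeder_s n ^ 2 = schroeder_sq_sum n"
    and "schroeder_s n * schroeder_s (n + 1) = schroeder_prod_sum n"
    by simp_all
qed

section \<open>Summation over the index of the sequence\<close>

definition delannoy_moment1 :: "nat \<Rightarrow> nat \<Rightarrow> rat" where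
  "delannoy_moment1 n j
     = of_nat n * (of_nat n + 1) / 2 * of_nat (n - 1 choose j) * of_nat (n + j + 1 choose j) * catalan j"

definition delannoy_moment3 :: "nat \<Rightarrow> nat \<Rightarrow> rat" where
  "delannoy_moment3 n j = of_nat n ^ 2 * (of_nat n + 1) ^ 2 / 2 * of_nat (n - 1 choose j)
     * of_nat (n + j + 1 choose j) * of_nat (2 * j choose j) / (of_nat j + 2)"

definition schroeder_moment :: "nat \<Rightarrow> nat \<Rightarrow> rat" where
  "schroeder_moment n j = (of_nat n + 1) * (of_nat n + 2) * catalan (j + 1)
     * of_nat (n + 1 choose (j + 2)) * of_nat (n + j + 2 choose j)"

lemma delannoy_moments_Suc:
  assumes "n \<ge> 1"
  shows "delannoy_moment1 (n + 1) j - delannoy_moment1 n j = (of_nat n + 1) * delannoy_prod_coeff (n + 1) j"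
    and "delannoy_moment3 (n + 1) j - delannoy_moment3 n j = (of_nat n + 1) ^ 3 * delannoy_prod_coeff (n + 1) j"
proof -
  define x :: rat where "x = of_nat n"
  have x_eqs: "of_nat (n - 1) = x - 1" "of_nat (n - Suc 0) = x - 1" "of_nat (n + 1) = x + 1" "of_nat n = x"
    using assms by (simp_all add: x_def of_nat_diff)
  have shifts: "n + 1 - 1 = n" "n + 1 + j + 1 = n + j + 2" "n + 1 + j = n + j + 1" "n + j + 1 + 1 = n + j + 2"
    by simp_all
  define C :: rat where "C = of_nat (2 * j choose j)"
  have "delannoy_moment1 (n + 1) j - delannoy_moment1 n j = (of_nat n + 1) * delannoy_prod_coeff (n + 1) j
     \<and> delannoy_moment3 (n + 1) j - delannoy_moment3 n j = (of_nat n + 1) ^ 3 * delannoy_prod_coeff (n + 1) j"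
  proof (cases j)
    case 0
    then show ?thesis
      unfolding delannoy_moment1_def delannoy_moment3_def delannoy_prod_coeff_def catalan_def shifts x_eqs
      by (simp add: algebra_simps power2_eq_square power3_eq_cube)
  next
    case (Suc i)
    define Q where "Q = pochhammer (x - of_nat i) i"
    define R where "R = pochhammer (x + 3) i"
    have binomials:
      "of_nat (n choose j) = Q * x / fact j"
      "of_nat (n - 1 choose j) = (x - of_nat i - 1) * Q / fact j"
      "of_nat (n + j + 2 choose j) = R * (x + 3 + of_nat i) / fact j"
      "of_nat (n + j + 1 choose j) = (x + 2) * R / fact j"
      unfolding Suc Q_def R_def
      subgoal by (subst of_nat_choose_pochhammer[of "x - of_nat i"]) (auto simp: x_eqs pochhammer_Suc_right[of x])
      subgoal by (subst of_nat_choose_pochhammer[of "x - of_nat i - 1"])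
          (auto simp: x_eqs pochhammer_Suc_left[of "x - of_nat i"])
      subgoal by (subst of_nat_choose_pochhammer[of "x + 3"])
          (auto simp: x_def pochhammer_Suc_right[of "x + 3 + of_nat i"])
      subgoal by (subst of_nat_choose_pochhammer[of "x + 2"]) (auto simp: x_def pochhammer_Suc_left[of "x + 3"])
      done
    have of_nat_j: "(of_nat j :: rat) = of_nat i + 1"
      unfolding Suc by simp
    have "(of_nat i + 2 :: rat) \<noteq> 0" "(of_nat i + 3 :: rat) \<noteq> 0" "(2 + of_nat i :: rat) \<noteq> 0"
      "(3 + of_nat i :: rat) \<noteq> 0"
      by (simp_all add: add_nonneg_pos add_pos_nonneg)
    then show ?thesis
      unfolding delannoy_moment1_def delannoy_moment3_def delannoy_prod_coeff_def catalan_def shifts x_eqs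
        binomials C_def[symmetric] of_nat_j
      by (simp add: divide_simps; simp add: algebra_simps power2_eq_square power3_eq_cube)
  qed
  then show "delannoy_moment1 (n + 1) j - delannoy_moment1 n j = (of_nat n + 1) * delannoy_prod_coeff (n + 1) j"
    and "delannoy_moment3 (n + 1) j - delannoy_moment3 n j = (of_nat n + 1) ^ 3 * delannoy_prod_coeff (n + 1) j"
    by auto
qed

lemma schroeder_moment_Suc:
  "schroeder_moment (n + 1) j - schroeder_moment n j
     = (of_nat n + 1) * (of_nat n + 2) * (2 * of_nat n + 3) * schroeder_sq_coeff (n + 1) j"
proof -
  define x :: rat where "x = of_nat n"
  have x_eqs: "of_nat (n + 1) = x + 1" "of_nat n = x"
    by (simp_all add: x_def)
  have shifts: "n + 1 - 1 = n" "n + 1 + 1 = n + 2" "n + 1 + j + 2 = n + j + 3" "n + 1 + j + 1 = n + j + 2"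
    by simp_all
  define C where "C = catalan (j + 1)"
  show ?thesis
  proof (cases j)
    case 0
    then show ?thesis
      unfolding schroeder_moment_def schroeder_sq_coeff_def catalan_quot_def C_def[symmetric] 0 shifts
        add_0_left of_nat_choose_two
      by (simp add: x_eqs field_simps; simp add: algebra_simps)
  next
    case (Suc i)
    define Q where "Q = pochhammer (x - of_nat i) i"
    define R where "R = pochhammer (x + 4) i"
    have binomials:
      "of_nat (n choose j) = Q * x / fact j"
      "of_nat (n + 1 choose (j + 2)) = (x - of_nat i - 1) * Q * x * (x + 1) / fact (j + 2)"
      "of_nat (n + 2 choose (j + 2)) = Q * x * (x + 1) * (x + 2) / fact (j + 2)"
      "of_nat (n + j + 2 choose j) = (x + 3) * R / fact j"
      "of_nat (n + j + 3 choose j) = R * (x + 4 + of_nat i) / fact j"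
      unfolding Suc Q_def R_def
      subgoal by (subst of_nat_choose_pochhammer[of "x - of_nat i"]) (auto simp: x_eqs pochhammer_Suc_right[of x])
      subgoal by (subst of_nat_choose_pochhammer[of "x - of_nat i - 1"])
          (auto simp: x_eqs pochhammer_Suc_left[of "x - of_nat i"] pochhammer_Suc_right[of x]
            pochhammer_Suc_right[of "x + 1"] numeral_2_eq_2)
      subgoal by (subst of_nat_choose_pochhammer[of "x - of_nat i"])
          (auto simp: x_eqs pochhammer_Suc_right[of x] pochhammer_Suc_right[of "x + 1"]
            pochhammer_Suc_right[of "x + 2"] numeral_2_eq_2)
      subgoal by (subst of_nat_choose_pochhammer[of "x + 3"]) (auto simp: x_def pochhammer_Suc_left[of "x + 4"])
      subgoal by (subst of_nat_choose_pochhammer[of "x + 4"])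
          (auto simp: x_def pochhammer_Suc_right[of "x + 4 + of_nat i"])
      done
    define F :: rat where "F = fact (j + 2)"
    have i_nonzero: "(of_nat i + 2 :: rat) \<noteq> 0" "(of_nat i + 3 :: rat) \<noteq> 0"
      "(2 + of_nat i :: rat) \<noteq> 0" "(3 + of_nat i :: rat) \<noteq> 0"
      by (simp_all add: add_nonneg_pos add_pos_nonneg)
    have fact_j: "fact j = F / ((of_nat i + 3) * (of_nat i + 2))"
      by (rule eq_divide_imp, use i_nonzero in simp, simp add: F_def Suc numeral_2_eq_2 algebra_simps)
    have of_nat_j: "(of_nat j :: rat) = of_nat i + 1"
      unfolding Suc by simp
    have "F \<noteq> 0" unfolding F_def by simp
    then show ?thesis
      unfolding schroeder_moment_def schroeder_sq_coeff_def catalan_quot_def C_def[symmetric] shifts x_eqs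
        binomials fact_j F_def[symmetric] of_nat_j
      using i_nonzero by (simp add: divide_simps; simp add: algebra_simps)
  qed
qed

lemma sum_delannoy_prod_coeff_moment1:
  "(\<Sum>k=1..n. of_nat k * delannoy_prod_coeff k j) = delannoy_moment1 n j"
proof (induction n)
  case 0
  then show ?case by (simp add: delannoy_moment1_def)
next
  case (Suc n)
  show ?case
  proof (cases "n = 0")
    case True
    then show ?thesis
      by (cases j) (simp_all add: delannoy_moment1_def delannoy_prod_coeff_def catalan_def)
  next
    case False
    then show ?thesis
      using Suc.IH delannoy_moments_Suc(1)[of n j] by (simp add: algebra_simps)
  qed
qed

lemma sum_delannoy_prod_coeff_moment3:
  "(\<Sum>k=1..n. of_nat k ^ 3 * delannoy_prod_coeff k j) = delannoy_moment3 n j"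
proof (induction n)
  case 0
  then show ?case by (simp add: delannoy_moment3_def)
next
  case (Suc n)
  show ?case
  proof (cases "n = 0")
    case True
    then show ?thesis
      by (cases j) (simp_all add: delannoy_moment3_def delannoy_prod_coeff_def catalan_def)
  next
    case False
    then show ?thesis
      using Suc.IH delannoy_moments_Suc(2)[of n j] by (simp add: algebra_simps)
  qed
qed

lemma sum_schroeder_sq_coeff_moment:
  "(\<Sum>k=1..n. of_nat k * (of_nat k + 1) * (2 * of_nat k + 1) * schroeder_sq_coeff k j) = schroeder_moment n j"
proof (induction n)
  case 0
  then show ?case by (simp add: schroeder_moment_def)
next
  case (Suc n)
  then show ?case
    using schroeder_moment_Suc[of n j] by (simp add: algebra_simps)
qed

lemma sum_pow2_sum_swap:
  "(\<Sum>k\<in>A. w k * pow2_sum (c k) N) = pow2_sum (\<lambda>j. \<Sum>k\<in>A. w k * c k j) N"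
  unfolding pow2_sum_def sum_distrib_left sum_distrib_right
  by (subst sum.swap) (simp add: mult_ac)

section \<open>Integrality\<close>

lemma catalan_eq_diff: "catalan j = of_nat (2 * j choose j) - of_nat (2 * j choose (j + 1))"
proof -
  define P where "P = pochhammer (of_nat j + 1 :: rat) j"
  have binomials:
    "(of_nat (2 * j choose j) :: rat) = P / fact j"
    "(of_nat (2 * j choose (j + 1)) :: rat) = of_nat j * P / fact (j + 1)"
    unfolding P_def
    subgoal by (subst of_nat_choose_pochhammer[of "of_nat j + 1"]) auto
    subgoal by (subst of_nat_choose_pochhammer[of "of_nat j"]) (auto simp: pochhammer_Suc_left[of "of_nat j + 1"])
    done
  have "(of_nat j + 1 :: rat) \<noteq> 0" "(1 + of_nat j :: rat) \<noteq> 0"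
    by (simp_all add: add_nonneg_pos add_pos_nonneg)
  then show ?thesis
    unfolding catalan_def binomials by (simp add: divide_simps; simp add: algebra_simps)
qed

lemma catalan_in_Ints: "catalan j \<in> \<int>"
  unfolding catalan_eq_diff by simp

lemma six_central_binomial_div:
  "6 * of_nat (2 * j choose j) / (of_nat j + 2) = 4 * of_nat (2 * j choose j) - (of_nat j + 1) * catalan (j + 1)"
proof -
  have "(of_nat j + 1 :: rat) \<noteq> 0" "(1 + of_nat j :: rat) \<noteq> 0" "(of_nat j + 2 :: rat) \<noteq> 0"
    "(2 + of_nat j :: rat) \<noteq> 0"
    by (simp_all add: add_nonneg_pos add_pos_nonneg)
  then show ?thesis
    unfolding catalan_def central_binomial_Suc by (simp add: divide_simps; simp add: algebra_simps)
qed

lemma of_nat_choose_product_swap: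
  assumes "n \<ge> 1"
  shows "(of_nat n + 1) * (of_nat n + 2) * of_nat (n + 1 choose (j + 2)) * of_nat (n + j + 2 choose j)
     = of_nat n * (of_nat n + 1) * of_nat (n - 1 choose j) * (of_nat (n + j + 2 choose (j + 2)) :: rat)"
proof -
  define x :: rat where "x = of_nat n"
  have x_eqs: "of_nat (n - 1) = x - 1" "of_nat (n - Suc 0) = x - 1" "of_nat (n + 1) = x + 1" "of_nat n = x"
    using assms by (simp_all add: x_def of_nat_diff)
  show ?thesis
  proof (cases j)
    case 0
    then show ?thesis
      unfolding 0 add_0_left add_0_right of_nat_choose_two by (simp add: x_eqs field_simps; simp add: algebra_simps)
  next
    case (Suc i)
    define Q where "Q = pochhammer (x - of_nat i) i"
    define R where "R = pochhammer (x + 4) i"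
    have binomials:
      "of_nat (n - 1 choose j) = (x - of_nat i - 1) * Q / fact j"
      "of_nat (n + 1 choose (j + 2)) = (x - of_nat i - 1) * Q * x * (x + 1) / fact (j + 2)"
      "of_nat (n + j + 2 choose j) = (x + 3) * R / fact j"
      "of_nat (n + j + 2 choose (j + 2)) = (x + 1) * (x + 2) * (x + 3) * R / fact (j + 2)"
      unfolding Suc Q_def R_def
      subgoal by (subst of_nat_choose_pochhammer[of "x - of_nat i - 1"])
          (auto simp: x_eqs pochhammer_Suc_left[of "x - of_nat i"])
      subgoal by (subst of_nat_choose_pochhammer[of "x - of_nat i - 1"])
          (auto simp: x_eqs pochhammer_Suc_left[of "x - of_nat i"] pochhammer_Suc_right[of x]
            pochhammer_Suc_right[of "x + 1"] numeral_2_eq_2)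
      subgoal by (subst of_nat_choose_pochhammer[of "x + 3"]) (auto simp: x_def pochhammer_Suc_left[of "x + 4"])
      subgoal by (subst of_nat_choose_pochhammer[of "x + 1"])
          (auto simp: x_def pochhammer_Suc_left[of "x + 2"] pochhammer_Suc_left[of "x + 3"]
            pochhammer_Suc_left[of "x + 4"] numeral_2_eq_2)
      done
    show ?thesis
      unfolding binomials x_eqs by (simp add: divide_simps; simp add: algebra_simps)
  qed
qed

lemma schroeder_prod_coeff_catalan:
  assumes "n \<ge> 1"
  shows "of_nat n * schroeder_prod_coeff n j
      = of_nat (n choose (j + 1)) * of_nat (n + j + 2 choose j) * catalan (j + 1)"
    and "(of_nat n + 2) * schroeder_prod_coeff n j
      = of_nat (n - 1 choose j) * of_nat (n + j + 2 choose (j + 1)) * catalan (j + 1)"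
proof -
  define x :: rat where "x = of_nat n"
  have x_eqs: "of_nat (n - 1) = x - 1" "of_nat (n - Suc 0) = x - 1" "of_nat n = x"
    using assms by (simp_all add: x_def of_nat_diff)
  define P where "P = pochhammer (x - of_nat j) j"
  define R where "R = pochhammer (x + 3) j"
  have binomials:
    "of_nat (n - 1 choose j) = P / fact j"
    "of_nat (n choose (j + 1)) = P * x / fact (j + 1)"
    "of_nat (n + j + 2 choose j) = R / fact j"
    "of_nat (n + j + 2 choose (j + 1)) = (x + 2) * R / fact (j + 1)"
    unfolding P_def R_def
    subgoal by (subst of_nat_choose_pochhammer[of "x - of_nat j"]) (auto simp: x_eqs)
    subgoal by (subst of_nat_choose_pochhammer[of "x - of_nat j"]) (auto simp: x_eqs pochhammer_Suc_right[of x])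
    subgoal by (subst of_nat_choose_pochhammer[of "x + 3"]) (auto simp: x_def)
    subgoal by (subst of_nat_choose_pochhammer[of "x + 2"]) (auto simp: x_def pochhammer_Suc_left[of "x + 3"])
    done
  have "(of_nat j + 1 :: rat) \<noteq> 0" "(1 + of_nat j :: rat) \<noteq> 0"
    by (simp_all add: add_nonneg_pos add_pos_nonneg)
  then show "of_nat n * schroeder_prod_coeff n j
      = of_nat (n choose (j + 1)) * of_nat (n + j + 2 choose j) * catalan (j + 1)"
    and "(of_nat n + 2) * schroeder_prod_coeff n j
      = of_nat (n - 1 choose j) * of_nat (n + j + 2 choose (j + 1)) * catalan (j + 1)"
    unfolding schroeder_prod_coeff_def catalan_quot_def binomials x_eqs
    by (simp_all add: divide_simps; simp add: algebra_simps)+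
qed

lemma schroeder_prod_coeff_pow2_in_Ints: "schroeder_prod_coeff n j * 2 ^ j \<in> \<int>"
proof (cases "n = 0 \<or> j = 0")
  case True
  then show ?thesis by (cases j) (auto simp: schroeder_prod_coeff_def)
next
  case False
  then obtain i where j: "j = Suc i" and n: "n \<ge> 1"
    using not0_implies_Suc by fastforce
  have "2 * schroeder_prod_coeff n j = (of_nat n + 2) * schroeder_prod_coeff n j - of_nat n * schroeder_prod_coeff n j"
    by (simp add: algebra_simps)
  also have "\<dots> = of_nat (n - 1 choose j) * of_nat (n + j + 2 choose (j + 1)) * catalan (j + 1)
      - of_nat (n choose (j + 1)) * of_nat (n + j + 2 choose j) * catalan (j + 1)"
    unfolding schroeder_prod_coeff_catalan[OF n] ..
  finally have "2 * schroeder_prod_coeff n j \<in> \<int>"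
    using catalan_in_Ints by simp
  then have "2 ^ i * (2 * schroeder_prod_coeff n j) \<in> \<int>"
    by simp
  then show ?thesis
    by (simp add: j mult_ac)
qed

lemma gcd_two_div_in_Ints:
  fixes A B :: rat
  assumes "A \<in> \<int>" "B \<in> \<int>" "(of_nat n + 2) * A = of_nat n * B"
  shows "of_nat (gcd 2 n) * A / of_nat n \<in> \<int>"
proof (cases "even n")
  case True
  show ?thesis
  proof (cases "n = 0")
    case False
    have "of_nat (gcd 2 n) * A = of_nat n * (B - A)"
      using True assms(3) by (simp add: algebra_simps)
    then show ?thesis
      using False assms(1,2) by simp
  qed simp
next
  case False
  then obtain m where m: "n = 2 * m + 1"
    using oddE by blast
  have "of_nat n * ((of_nat m + 1) * A - of_nat m * B) = of_nat (gcd 2 n) * A"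
  proof -
    have "of_nat n * ((of_nat m + 1) * A - of_nat m * B) = of_nat n * (of_nat m + 1) * A - of_nat m * (of_nat n * B)"
      by (simp add: algebra_simps)
    also have "\<dots> = of_nat n * (of_nat m + 1) * A - of_nat m * ((of_nat n + 2) * A)"
      by (simp only: assms(3))
    also have "\<dots> = A"
      unfolding m by (simp add: algebra_simps)
    finally show ?thesis
      using False by (simp add: coprime_iff_gcd_eq_1[symmetric])
  qed
  moreover have "(of_nat n :: rat) \<noteq> 0"
    using m by simp
  ultimately have "of_nat (gcd 2 n) * A / of_nat n = (of_nat m + 1) * A - of_nat m * B"
    by (simp add: field_simps)
  then show ?thesis
    using assms(1,2) by simp
qed

lemma sum_weighted_delannoy_products:
  "(\<Sum>k=1..n. w k * of_nat (delannoy k) * of_nat (delannoy (k - 1)))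
     = 3 * pow2_sum (\<lambda>j. \<Sum>k=1..n. w k * delannoy_prod_coeff k j) (n + 1)"
proof -
  have "(\<Sum>k=1..n. w k * of_nat (delannoy k) * of_nat (delannoy (k - 1)))
      = (\<Sum>k=1..n. (3 * w k) * pow2_sum (delannoy_prod_coeff k) (n + 1))"
  proof (rule sum.cong)
    fix k assume "k \<in> {1..n}"
    then have "of_nat (delannoy k) * of_nat (delannoy (k - 1)) = 3 * pow2_sum (delannoy_prod_coeff k) (n + 1)"
      using delannoy_sq_and_prod_sums(2) pow2_sum_delannoy_prod_coeff by simp
    then show "w k * of_nat (delannoy k) * of_nat (delannoy (k - 1))
        = (3 * w k) * pow2_sum (delannoy_prod_coeff k) (n + 1)"
      by (simp add: mult.assoc)
  qed simp
  also have "\<dots> = 3 * pow2_sum (\<lambda>j. \<Sum>k=1..n. w k * delannoy_prod_coeff k j) (n + 1)"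
    unfolding sum_pow2_sum_swap by (simp add: pow2_sum_cmult[symmetric] sum_distrib_left mult.assoc)
  finally show ?thesis .
qed

lemma delannoy_linear_sum_div_in_Ints:
  assumes "n \<ge> 1"
  shows "(\<Sum>k=1..n. of_nat k * of_nat (delannoy k) * of_nat (delannoy (k - 1)))
           / (3 * (of_nat n * (of_nat n + 1) / 2)) \<in> (\<int> :: rat set)"
proof -
  define c :: rat where "c = 3 * (of_nat n * (of_nat n + 1) / 2)"
  define u where "u j = of_nat (n - 1 choose j) * of_nat (n + j + 1 choose j) * catalan j" for j
  have "(\<Sum>k=1..n. of_nat k * of_nat (delannoy k) * of_nat (delannoy (k - 1))) = c * pow2_sum u (n + 1)"
    unfolding sum_weighted_delannoy_products sum_delannoy_prod_coeff_moment1 c_def u_def delannoy_moment1_def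
    by (simp add: pow2_sum_cmult[symmetric] mult.assoc)
  moreover have "c \<noteq> 0"
    using assms by (simp add: c_def add_nonneg_pos)
  moreover have "pow2_sum u (n + 1) \<in> \<int>"
    by (rule pow2_sum_in_Ints) (simp add: u_def catalan_in_Ints)
  ultimately show ?thesis
    by (simp add: c_def)
qed

lemma delannoy_cubic_sum_div_in_Ints:
  assumes "n \<ge> 1"
  shows "(\<Sum>k=1..n. of_nat k ^ 3 * of_nat (delannoy k) * of_nat (delannoy (k - 1)))
           / (of_nat n ^ 2 * (of_nat n + 1) ^ 2 / 4) \<in> (\<int> :: rat set)"
proof -
  define c :: rat where "c = of_nat n ^ 2 * (of_nat n + 1) ^ 2 / 4"
  define u where "u j = of_nat (n - 1 choose j) * of_nat (n + j + 1 choose j)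
    * (4 * of_nat (2 * j choose j) - (of_nat j + 1) * catalan (j + 1))" for j
  have "3 * delannoy_moment3 n j = c * u j" for j
    unfolding delannoy_moment3_def c_def u_def six_central_binomial_div[symmetric] by (simp add: field_simps)
  then have "(\<Sum>k=1..n. of_nat k ^ 3 * of_nat (delannoy k) * of_nat (delannoy (k - 1))) = c * pow2_sum u (n + 1)"
    unfolding sum_weighted_delannoy_products sum_delannoy_prod_coeff_moment3
    by (simp add: pow2_sum_cmult[symmetric])
  moreover have "c \<noteq> 0"
    using assms by (simp add: c_def add_nonneg_pos)
  moreover have "pow2_sum u (n + 1) \<in> \<int>"
    by (rule pow2_sum_in_Ints) (simp add: u_def catalan_in_Ints)
  ultimately show ?thesis
    by (simp add: c_def)
qed

lemma sum_weighted_schroeder_squares: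
  "(\<Sum>k=1..n. of_nat k * (of_nat k + 1) * (2 * of_nat k + 1) * schroeder_s k ^ 2)
     = pow2_sum (schroeder_moment n) (n + 1)"
proof -
  have "(\<Sum>k=1..n. of_nat k * (of_nat k + 1) * (2 * of_nat k + 1) * schroeder_s k ^ 2)
      = (\<Sum>k=1..n. of_nat k * (of_nat k + 1) * (2 * of_nat k + 1) * pow2_sum (schroeder_sq_coeff k) (n + 1))"
    by (rule sum.cong) (simp_all add: schroeder_sq_and_prod_sums(1) pow2_sum_schroeder_sq_coeff)
  also have "\<dots> = pow2_sum (schroeder_moment n) (n + 1)"
    unfolding sum_pow2_sum_swap sum_schroeder_sq_coeff_moment ..
  finally show ?thesis .
qed

lemma schroeder_weighted_sq_sum_div_in_Ints:
  assumes "n \<ge> 1"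
  shows "(\<Sum>k=1..n. of_nat k * (of_nat k + 1) * (2 * of_nat k + 1) * schroeder_s k ^ 2)
           / (of_nat n * (of_nat n + 1) * (of_nat n + 2) / of_nat (gcd 2 n)) \<in> (\<int> :: rat set)"
proof -
  define S where "S = (\<Sum>k=1..n. of_nat k * (of_nat k + 1) * (2 * of_nat k + 1) * schroeder_s k ^ 2)"
  define A where "A = pow2_sum (\<lambda>j. catalan (j + 1) * of_nat (n + 1 choose (j + 2)) * of_nat (n + j + 2 choose j)) (n + 1)"
  define B where "B = pow2_sum (\<lambda>j. catalan (j + 1) * of_nat (n - 1 choose j) * of_nat (n + j + 2 choose (j + 2))) (n + 1)"
  have S_A: "S = (of_nat n + 1) * (of_nat n + 2) * A"
    unfolding S_def A_def sum_weighted_schroeder_squares pow2_sum_cmult[symmetric] schroeder_moment_def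
    by (simp only: mult_ac)
  have "schroeder_moment n
      = (\<lambda>j. of_nat n * (of_nat n + 1) * (catalan (j + 1) * of_nat (n - 1 choose j) * of_nat (n + j + 2 choose (j + 2))))"
    using of_nat_choose_product_swap[OF assms] by (simp add: fun_eq_iff schroeder_moment_def mult_ac)
  then have S_B: "S = of_nat n * (of_nat n + 1) * B"
    unfolding S_def B_def sum_weighted_schroeder_squares pow2_sum_cmult[symmetric] by simp
  have nonzero: "(of_nat n + 1 :: rat) \<noteq> 0" "(of_nat n + 2 :: rat) \<noteq> 0" "(of_nat n :: rat) \<noteq> 0"
    "(of_nat (gcd 2 n) :: rat) \<noteq> 0"
    using assms by (simp_all add: add_nonneg_pos)
  have "(of_nat n + 1) * ((of_nat n + 2) * A) = (of_nat n + 1) * (of_nat n * B)"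
    using S_A S_B by (simp only: mult_ac)
  then have "(of_nat n + 2) * A = of_nat n * B"
    using nonzero(1) by simp
  moreover have "A \<in> \<int>" "B \<in> \<int>"
    unfolding A_def B_def by (simp_all add: pow2_sum_in_Ints catalan_in_Ints)
  ultimately have "of_nat (gcd 2 n) * A / of_nat n \<in> \<int>"
    by (rule gcd_two_div_in_Ints[rotated 2])
  moreover have "S / (of_nat n * (of_nat n + 1) * (of_nat n + 2) / of_nat (gcd 2 n))
      = ((of_nat n + 1) * (of_nat n + 2)) * (of_nat (gcd 2 n) * A) / (((of_nat n + 1) * (of_nat n + 2)) * of_nat n)"
    unfolding S_A by (simp add: mult_ac)
  moreover have "\<dots> = of_nat (gcd 2 n) * A / of_nat n"
    using nonzero by (intro mult_divide_mult_cancel_left) simp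
  ultimately show ?thesis
    by (simp add: S_def)
qed

text \<open>With \<open>T n = n (n + 1) (n + 2) s\<^sub>n s\<^sub>n\<^sub>+\<^sub>1 / 3\<close>, the Schroeder recurrence gives
  \<open>T n + T (n + 1) = (n + 1) (n + 2) (2 n + 3) s\<^sub>n\<^sub>+\<^sub>1\<^sup>2\<close>.\<close>

lemma schroeder_alternating_sum:
  assumes "n \<ge> 1"
  shows "(\<Sum>k=1..n. of_nat k * (of_nat k + 1) * (2 * of_nat k + 1) * (-1) ^ (n - k) * schroeder_s k ^ 2)
     = of_nat n * (of_nat n + 1) * (of_nat n + 2) * (schroeder_s n * schroeder_s (n + 1)) / 3"
  using assms
proof (induction n rule: nat_induct_at_least)
  case base
  then show ?case
    using schroeder_s_1 schroeder_s_2 by (simp add: numeral_2_eq_2)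
next
  case (Suc n)
  define w where "w k = of_nat k * (of_nat k + 1) * (2 * of_nat k + 1) * schroeder_s k ^ 2" for k
  have "(\<Sum>k=1..Suc n. of_nat k * (of_nat k + 1) * (2 * of_nat k + 1) * (-1) ^ (Suc n - k) * schroeder_s k ^ 2)
      = - (\<Sum>k=1..n. of_nat k * (of_nat k + 1) * (2 * of_nat k + 1) * (-1) ^ (n - k) * schroeder_s k ^ 2)
        + w (Suc n)"
  proof -
    have "(\<Sum>k=1..n. of_nat k * (of_nat k + 1) * (2 * of_nat k + 1) * (-1) ^ (Suc n - k) * schroeder_s k ^ 2)
       = (\<Sum>k=1..n. - (of_nat k * (of_nat k + 1) * (2 * of_nat k + 1) * (-1) ^ (n - k) * schroeder_s k ^ 2))"
      by (rule sum.cong) (auto simp: Suc_diff_le)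
    then show ?thesis
      by (simp add: w_def sum_negf)
  qed
  also have "\<dots> = - (of_nat n * (of_nat n + 1) * (of_nat n + 2) * (schroeder_s n * schroeder_s (n + 1)) / 3)
      + w (Suc n)"
    using Suc.IH by simp
  also have "\<dots> = of_nat (Suc n) * (of_nat (Suc n) + 1) * (of_nat (Suc n) + 2)
      * (schroeder_s (Suc n) * schroeder_s (Suc n + 1)) / 3"
  proof -
    have recurrence: "(of_nat n + 3) * schroeder_s (n + 2)
        = 3 * (2 * of_nat n + 3) * schroeder_s (n + 1) - of_nat n * schroeder_s n"
      using schroeder_rec[of "n + 1"] Suc.hyps by (simp add: algebra_simps)
    have "of_nat (Suc n) * (of_nat (Suc n) + 1) * (of_nat (Suc n) + 2) * (schroeder_s (Suc n) * schroeder_s (Suc n + 1))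
        = (of_nat n + 1) * (of_nat n + 2) * schroeder_s (n + 1) * ((of_nat n + 3) * schroeder_s (n + 2))"
      by (simp add: algebra_simps)
    also have "\<dots> = (of_nat n + 1) * (of_nat n + 2) * schroeder_s (n + 1)
        * (3 * (2 * of_nat n + 3) * schroeder_s (n + 1) - of_nat n * schroeder_s n)"
      unfolding recurrence ..
    finally have product: "of_nat (Suc n) * (of_nat (Suc n) + 1) * (of_nat (Suc n) + 2)
        * (schroeder_s (Suc n) * schroeder_s (Suc n + 1))
        = (of_nat n + 1) * (of_nat n + 2) * schroeder_s (n + 1)
          * (3 * (2 * of_nat n + 3) * schroeder_s (n + 1) - of_nat n * schroeder_s n)" .
    show ?thesis
      unfolding product w_def by (simp add: algebra_simps power2_eq_square)
  qed
  finally show ?case .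
qed

lemma schroeder_consecutive_prod_div3_in_Ints:
  assumes "n \<ge> 1"
  shows "schroeder_s n * schroeder_s (n + 1) / 3 \<in> \<int>"
  using schroeder_sq_and_prod_sums(2)[OF assms]
  by (simp add: schroeder_prod_sum_def pow2_sum_in_Ints schroeder_prod_coeff_pow2_in_Ints)

theorem corollary1p1:
  fixes n :: nat
  assumes "n \<ge> 1"
  shows "((\<Sum>k=1..n. of_nat k * of_nat (delannoy k) * of_nat (delannoy (k - 1)))
           / (3 * (of_nat n * (of_nat n + 1) / 2)) \<in> (\<int> :: rat set)) \<and>
        ((\<Sum>k=1..n. of_nat k ^ 3 * of_nat (delannoy k) * of_nat (delannoy (k - 1)))
           / (of_nat n ^ 2 * (of_nat n + 1) ^ 2 / 4) \<in> (\<int> :: rat set)) \<and>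
        ((\<Sum>k=1..n. of_nat k * (of_nat k + 1) * (2 * of_nat k + 1) * schroeder_s k ^ 2)
           / (of_nat n * (of_nat n + 1) * (of_nat n + 2) / of_nat (gcd 2 n)) \<in> (\<int> :: rat set)) \<and>
        ((1 / (of_nat n * (of_nat n + 1) * (of_nat n + 2))) *
           (\<Sum>k=1..n. of_nat k * (of_nat k + 1) * (2 * of_nat k + 1) * (-1) ^ (n - k) * schroeder_s k ^ 2)
         = schroeder_s n * schroeder_s (n + 1) / 3) \<and>
        (schroeder_s n * schroeder_s (n + 1) / 3 \<in> (\<int> :: rat set))"
proof -
  have "(of_nat n * (of_nat n + 1) * (of_nat n + 2) :: rat) \<noteq> 0"
    using assms by (simp add: add_nonneg_pos)
  then have "(1 / (of_nat n * (of_nat n + 1) * (of_nat n + 2))) *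
      (\<Sum>k=1..n. of_nat k * (of_nat k + 1) * (2 * of_nat k + 1) * (-1) ^ (n - k) * schroeder_s k ^ 2)
    = schroeder_s n * schroeder_s (n + 1) / 3"
    unfolding schroeder_alternating_sum[OF assms] by simp
  then show ?thesis
    using delannoy_linear_sum_div_in_Ints[OF assms] delannoy_cubic_sum_div_in_Ints[OF assms]
      schroeder_weighted_sq_sum_div_in_Ints[OF assms] schroeder_consecutive_prod_div3_in_Ints[OF assms]
    by blast
qed

end
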